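(* Let $\lambda=(\lambda_1,\lambda_2)$ be a partition with two parts and $n=\lambda_1+\lambda_2$. Two vertices $p,q$ of the crystal skeleton $\mathsf{CS}(\lambda_1,\lambda_2)$ lie in the same strongly connected component if and only if $\mathsf{rcomp}(p)=\mathsf{rcomp}(q)$. Hence the strongly connected components of $\mathsf{CS}(\lambda_1,\lambda_2)$ are indexed by the rectangular compositions.
   Context: French notation; $\mathsf{SYT}(\lambda)$ standard tableaux; $\mathsf{row}(T)$ reads rows left to right from top row to bottom row; $\mathsf{std}$ replaces the $a_j$ entries $j$, in reading order, by $a_1+\dots+a_{j-1}+1,\dots,a_1+\dots+a_j$. Crystal operator $f_i$: in the subword of letters $i,i+1$ of the reading word, bracket each $i+1$ with an unbracketed $i$ to its right (parenthesis matching); $f_i$ changes the rightmost unbracketed $i$ to $i+1$. For a permutation $\pi$ of $[n]$ and $I=[i,i+2m]$, $m\ge1$, $I$ is a Dyck pattern interval of $\pi$ if the RSK insertion tableau of the subword $\pi|_I$ has bottom row $i,\dots,i+m$ and top row $i+m+1,\dots,i+2m$. The crystal skeleton $\mathsf{CS}(\lambda)$ is the directed graph on $\mathsf{SYT}(\lambda)$ with, for each Dyck pattern interval $I=[i,i+2m]$ of $\mathsf{row}(T)$, an edge $T\xrightarrow{I}\mathsf{std}(f_i(b))$, $b$ obtained from $T$ by replacing entries $i,\dots,i+m$ by $i$ and $i+m+1,\dots,i+2m$ by $i+1$ (equivalently, the crystal of semistandard tableaux of shape $\lambda$ with each quasi-crystal $\{b:\mathsf{std}(b)=T\}$ contracted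 to $T$). A tableau $T\in\mathsf{SYT}(\lambda_1,\lambda_2)$ is identified with the sequence $p\in\{1,-1\}^n$ with $p_i=-1$ if $i$ is in the bottom (first) row and $p_i=1$ if $i$ is in the second row; set $h_0=0$, $h_k=p_1+\dots+p_k$ (so $h_k\le0$). Call step $i$ eastern-exposed if $p_i=-1$ and $h_j<h_{i-1}$ for all $j$ with $i\le j\le n$. Then $p$ decomposes uniquely as $(-1)^{n_0}D_1(-1)^{n_1}D_2\cdots D_\ell(-1)^{n_\ell}$, where the $(-1)^{n_k}$ are the maximal runs of eastern-exposed steps ($n_1,\dots,n_{\ell-1}\ge1$) and each $D_k$ is a nonempty Dyck subpath (it starts and ends at the same height and never exceeds it). The rectangular composition $\mathsf{rcomp}(p)$ is the sequence of consecutive intervals of $[n]$ $(\alpha^{(0)},\beta^{(1)},\alpha^{(1)},\dots,\beta^{(\ell)},\alpha^{(\ell)})$, where $\alpha^{(k)}$ is the set of positions of the steps in $(-1)^{n_k}$ and $\beta^{(k)}$ the set of positions of the steps in $D_k$ ($\alpha^{(0)}$ or $\alpha^{(\ell)}$ may be empty). *)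

theory Defs
  imports Main
begin

text \<open>A tableau of shape (l1,l2) is a pair (r1, r2): r1 is the bottom (first, longer) row,
  r2 the top (second) row, both read left to right.\<close>

type_synonym tab = "nat list \<times> nat list"

definition SYT :: "nat \<Rightarrow> nat \<Rightarrow> tab set" where
  "SYT l1 l2 = {(r1, r2). length r1 = l1 \<and> length r2 = l2 \<and>
      sorted_wrt (<) r1 \<and> sorted_wrt (<) r2 \<and>
      set r1 \<union> set r2 = {1..l1 + l2} \<and> (\<forall>j<l2. r1 ! j < r2 ! j)}"

definition row_word :: "tab \<Rightarrow> nat list" where
  "row_word T = snd T @ fst T"

definition of_word :: "nat \<Rightarrow> nat list \<Rightarrow> tab" where
  "of_word l2 w = (drop l2 w, take l2 w)"

definition std :: "nat list \<Rightarrow> nat list" where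
  "std w = map (\<lambda>k. card {l. l < length w \<and> w ! l < w ! k}
                    + card {l. l < k \<and> w ! l = w ! k} + 1) [0..<length w]"

text \<open>Positions of unbracketed letters i (each i+1 is bracketed with an unbracketed i
  to its right; parenthesis matching, scanning left to right).
  Arguments: i, current position, number of open (unmatched) letters i+1, word.\<close>
fun unbr :: "nat \<Rightarrow> nat \<Rightarrow> nat \<Rightarrow> nat list \<Rightarrow> nat list" where
  "unbr i k c [] = []"
| "unbr i k c (x # xs) =
     (if x = Suc i then unbr i (Suc k) (Suc c) xs
      else if x = i then (if 0 < c then unbr i (Suc k) (c - 1) xs
                          else k # unbr i (Suc k) c xs)
      else unbr i (Suc k) c xs)"

definition f_op :: "nat \<Rightarrow> nat list \<Rightarrow> nat list option" where
  "f_op i w = (let U = unbr i 0 0 w in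
      if U = [] then None else Some (w[last U := Suc i]))"

text \<open>Tableaux as lists of rows, first (bottom) row first.\<close>
fun row_insert :: "nat \<Rightarrow> nat list list \<Rightarrow> nat list list" where
  "row_insert x [] = [[x]]"
| "row_insert x (r # rs) =
     (if \<forall>y\<in>set r. y \<le> x then (r @ [x]) # rs
      else (takeWhile (\<lambda>y. y \<le> x) r @ x # tl (dropWhile (\<lambda>y. y \<le> x) r))
           # row_insert (hd (dropWhile (\<lambda>y. y \<le> x) r)) rs)"

definition insertion_tableau :: "nat list \<Rightarrow> nat list list" where
  "insertion_tableau w = foldl (\<lambda>P x. row_insert x P) [] w"

definition dyck_interval :: "nat \<Rightarrow> nat list \<Rightarrow> nat \<Rightarrow> nat \<Rightarrow> bool" where
  "dyck_interval n w i m \<longleftrightarrow> 1 \<le> m \<and> 1 \<le> i \<and> i + 2 * m \<le> n \<and>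
     insertion_tableau (filter (\<lambda>x. i \<le> x \<and> x \<le> i + 2 * m) w)
       = [[i..<i + m + 1], [i + m + 1..<i + 2 * m + 1]]"

definition relabel :: "nat \<Rightarrow> nat \<Rightarrow> nat \<Rightarrow> nat" where
  "relabel i m x = (if i \<le> x \<and> x \<le> i + m then i
                    else if i + m + 1 \<le> x \<and> x \<le> i + 2 * m then i + 1 else x)"

definition CS_edge :: "nat \<Rightarrow> nat \<Rightarrow> tab \<Rightarrow> tab \<Rightarrow> bool" where
  "CS_edge l1 l2 T T' \<longleftrightarrow> T \<in> SYT l1 l2 \<and> T' \<in> SYT l1 l2 \<and>
     (\<exists>i m w'. dyck_interval (l1 + l2) (row_word T) i m \<and>
        f_op i (map (relabel i m) (row_word T)) = Some w' \<and>
        T' = of_word l2 (std w'))"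

definition same_scc :: "nat \<Rightarrow> nat \<Rightarrow> tab \<Rightarrow> tab \<Rightarrow> bool" where
  "same_scc l1 l2 T T' \<longleftrightarrow> (CS_edge l1 l2)\<^sup>*\<^sup>* T T' \<and> (CS_edge l1 l2)\<^sup>*\<^sup>* T' T"

definition path_of :: "tab \<Rightarrow> nat \<Rightarrow> int" where
  "path_of T k = (if k \<in> set (fst T) then -1 else 1)"

definition height :: "(nat \<Rightarrow> int) \<Rightarrow> nat \<Rightarrow> int" where
  "height p k = (\<Sum>j = 1..k. p j)"

definition eastern_exposed :: "nat \<Rightarrow> (nat \<Rightarrow> int) \<Rightarrow> nat \<Rightarrow> bool" where
  "eastern_exposed n p i \<longleftrightarrow> 1 \<le> i \<and> i \<le> n \<and> p i = -1 \<and>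
     (\<forall>j. i \<le> j \<and> j \<le> n \<longrightarrow> height p j < height p (i - 1))"

fun runs :: "('a \<Rightarrow> bool) \<Rightarrow> 'a list \<Rightarrow> 'a list list" where
  "runs P [] = []"
| "runs P (x # xs) = (case runs P xs of
       [] \<Rightarrow> [[x]]
     | r # rs \<Rightarrow> (if r \<noteq> [] \<and> P (hd r) = P x then (x # r) # rs else [x] # r # rs))"

text \<open>rcomp(p) = (alpha0, beta1, alpha1, ..., beta_l, alpha_l): alternately the maximal runs
  of eastern-exposed steps and the maximal runs of the remaining steps (the Dyck
  subpaths D_k), with alpha0 and alpha_l empty when p starts / ends with a Dyck subpath.\<close>
definition rcomp :: "nat \<Rightarrow> (nat \<Rightarrow> int) \<Rightarrow> nat set list" where
  "rcomp n p = (let E = eastern_exposed n p; R = runs E [1..<n + 1] in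
     if R = [] then [{}] else
     map set ((if E (hd (hd R)) then [] else [[]]) @ R
              @ (if E (last (last R)) then [] else [[]])))"

end

theory Submission
  imports Defs
begin

lemma height_0 [simp]: "height p 0 = 0"
  by (simp add: height_def)

lemma height_Suc: "height p (Suc k) = height p k + p (Suc k)"
  by (simp add: height_def)

lemma height_const_run:
  assumes run: "\<forall>k. a < k \<and> k \<le> b \<longrightarrow> p k = c" and "a \<le> k" and "k \<le> b"
  shows "height p k = height p a + c * int (k - a)"
proof -
  have "height p (a + d) = height p a + c * int d" if "a + d \<le> b" for d
    using that by (induction d) (auto simp: height_Suc run algebra_simps)
  from this[of "k - a"] show ?thesis
    using assms by simp
qed

lemma height_cong_from:
  assumes "height q a = height p a" and "\<forall>k. a < k \<and> k \<le> j \<longrightarrow> q k = p k" and "a \<le> j"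
  shows "height q j = height p j"
  using assms(2,3)
proof (induction j)
  case (Suc j)
  then show ?case
    using assms(1) by (cases "a = Suc j") (auto simp: height_Suc)
qed (use assms(1) in simp)

lemma height_cong: "\<forall>k. 0 < k \<and> k \<le> j \<longrightarrow> q k = p k \<Longrightarrow> height q j = height p j"
  using height_cong_from[of q 0 p j] by simp

lemma height_cong_outside:
  assumes "\<forall>k. k < a \<or> b < k \<longrightarrow> q k = p k" and "height q b = height p b"
    and "k < a \<or> b \<le> k"
  shows "height q k = height p k"
  using assms height_cong[of k q p] height_cong_from[of q b p k] by auto

lemma not_eastern_exposed_if_height_le:
  "j \<le> k \<Longrightarrow> k \<le> n \<Longrightarrow> height p (j - 1) \<le> height p k \<Longrightarrow> \<not> eastern_exposed n p j"
  unfolding eastern_exposed_def by force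

lemma below_from_iff_outside_window:
  assumes same_height: "\<And>k. k < a \<or> b \<le> k \<Longrightarrow> height q k = height p k"
    and below: "\<And>k. a \<le> k \<Longrightarrow> k \<le> b \<Longrightarrow>
        max (height p k) (height q k) \<le> max (height p (a - 1)) (height p b)"
    and "j < a" "a \<le> b" "b \<le> n" and r: "r = p \<or> r = q"
  shows "(\<forall>k. j \<le> k \<and> k \<le> n \<longrightarrow> height r k < H) \<longleftrightarrow>
    (\<forall>k. j \<le> k \<and> k \<le> n \<and> (k < a \<or> b \<le> k) \<longrightarrow> height p k < H)"
proof
  assume outside: "\<forall>k. j \<le> k \<and> k \<le> n \<and> (k < a \<or> b \<le> k) \<longrightarrow> height p k < H"
  have "j \<le> a - 1" "a - 1 \<le> n" "a - 1 < a" "j \<le> b"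
    using assms(3-5) by auto
  then have ends: "height p (a - 1) < H" "height p b < H"
    using outside \<open>b \<le> n\<close> by auto
  show "\<forall>k. j \<le> k \<and> k \<le> n \<longrightarrow> height r k < H"
  proof (intro allI impI)
    fix k assume k: "j \<le> k \<and> k \<le> n"
    show "height r k < H"
    proof (cases "k < a \<or> b \<le> k")
      case True
      then show ?thesis
        using outside k r same_height by auto
    next
      case False
      then have "max (height p k) (height q k) < H"
        using below[of k] ends by (auto simp: max_def split: if_splits)
      then show ?thesis
        using r by auto
    qed
  qed
qed (use r same_height in auto)

lemma eastern_exposed_cong_outside:
  assumes agree: "\<forall>k. k < a \<or> b < k \<longrightarrow> q k = p k"
    and end_eq: "height q b = height p b"
    and below: "\<And>k. a \<le> k \<Longrightarrow> k \<le> b \<Longrightarrow>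
        max (height p k) (height q k) \<le> max (height p (a - 1)) (height p b)"
    and "1 \<le> a" and "a \<le> b" and "b \<le> n" and j: "j < a \<or> b < j"
  shows "eastern_exposed n q j = eastern_exposed n p j"
proof -
  have same_height: "height q k = height p k" if "k < a \<or> b \<le> k" for k
    using height_cong_outside[OF agree end_eq that] .
  show ?thesis
  proof (cases "b < j")
    case True
    then have "b \<le> j - 1" by simp
    then have "height q (j - 1) = height p (j - 1)" "\<forall>k\<ge>j. height q k = height p k" "q j = p j"
      using True agree same_height by auto
    then show ?thesis
      unfolding eastern_exposed_def by auto
  next
    case False
    with j have "j < a" by simp
    have "height q (j - 1) = height p (j - 1)"
      using same_height[of "j - 1"] \<open>j < a\<close> by linarith
    moreover have "q j = p j"
      using agree \<open>j < a\<close> by simp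
    ultimately show ?thesis
      using below_from_iff_outside_window[OF same_height below \<open>j < a\<close> assms(5,6), of _ "height p (j - 1)"]
      unfolding eastern_exposed_def by auto
  qed
qed

text \<open>Steps outside [1, n] are up-steps, as for \<^const>\<open>path_of\<close>.\<close>
definition ballot_path :: "nat \<Rightarrow> int \<Rightarrow> (nat \<Rightarrow> int) \<Rightarrow> bool" where
  "ballot_path n h p \<longleftrightarrow> (\<forall>k. p k = 1 \<or> (1 \<le> k \<and> k \<le> n \<and> p k = -1)) \<and>
     (\<forall>k\<le>n. height p k \<le> 0) \<and> height p n = h"

lemma ballot_path_down_step:
  "ballot_path n h p \<Longrightarrow> p k \<noteq> 1 \<Longrightarrow> p k = -1 \<and> 1 \<le> k \<and> k \<le> n"
  unfolding ballot_path_def by metis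

lemma ballot_path_step_le_1: "ballot_path n h p \<Longrightarrow> p k \<le> 1"
  using ballot_path_down_step[of n h p k] by fastforce

lemma ballot_path_up_step_outside: "ballot_path n h p \<Longrightarrow> n < k \<Longrightarrow> p k = 1"
  unfolding ballot_path_def by force

definition moment :: "nat \<Rightarrow> (nat \<Rightarrow> int) \<Rightarrow> int" where
  "moment n p = (\<Sum>k = 1..n. int k * p k)"

lemma moment_upd:
  assumes "1 \<le> a" "a \<le> n"
  shows "moment n (p(a := x)) = moment n p + int a * (x - p a)"
proof -
  have "moment n (p(a := x)) = (\<Sum>k = 1..n. int k * p k + (if k = a then int a * (x - p a) else 0))"
    unfolding moment_def by (rule sum.cong) (auto simp: algebra_simps)
  then show ?thesis
    using assms by (simp add: sum.distrib moment_def)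
qed

lemma moment_le: "ballot_path n h p \<Longrightarrow> moment n p \<le> (\<Sum>k = 1..n. int k)"
  unfolding moment_def by (rule sum_mono) (simp add: ballot_path_step_le_1 mult_left_le)

definition exposed_sum :: "nat \<Rightarrow> (nat \<Rightarrow> int) \<Rightarrow> nat" where
  "exposed_sum n p = \<Sum> {j \<in> {1..n}. eastern_exposed n p j}"

definition UDU_factor :: "(nat \<Rightarrow> int) \<Rightarrow> nat \<Rightarrow> nat \<Rightarrow> bool" where
  "UDU_factor p i m \<longleftrightarrow> p i = 1 \<and> (\<forall>k. i < k \<and> k \<le> i + m \<longrightarrow> p k = -1) \<and>
     (\<forall>k. i + m < k \<and> k \<le> i + 2 * m \<longrightarrow> p k = 1)"

definition DDU_factor :: "(nat \<Rightarrow> int) \<Rightarrow> nat \<Rightarrow> nat \<Rightarrow> bool" where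
  "DDU_factor p i m \<longleftrightarrow> (\<forall>k. i \<le> k \<and> k \<le> i + m \<longrightarrow> p k = -1) \<and>
     (\<forall>k. i + m < k \<and> k \<le> i + 2 * m \<longrightarrow> p k = 1)"

locale window =
  fixes n i m :: nat
  assumes m_pos: "1 \<le> m" and i_pos: "1 \<le> i" and window_le: "i + 2 * m \<le> n"

text \<open>The factor U D^m U^m on the steps i, ..., i + 2m becomes D^m U^(m+1).\<close>
locale UDU_move = window n i m for n i m +
  fixes p q :: "nat \<Rightarrow> int"
  assumes factor: "UDU_factor p i m" and move: "q = p(i := -1, i + m := 1)"
begin

lemma q_blocks:
  shows "i \<le> k \<Longrightarrow> k < i + m \<Longrightarrow> q k = -1"
    and "i + m \<le> k \<Longrightarrow> k \<le> i + 2 * m \<Longrightarrow> q k = 1"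
  using factor m_pos unfolding move UDU_factor_def by auto

lemma heights:
  shows height_p_down: "i \<le> k \<Longrightarrow> k \<le> i + m \<Longrightarrow>
      height p k = height p (i - 1) + 1 - int (k - i)"
    and height_p_up: "i + m \<le> k \<Longrightarrow> k \<le> i + 2 * m \<Longrightarrow>
      height p k = height p (i - 1) + 1 - int m + int (k - i - m)"
    and height_q_down: "i - 1 \<le> k \<Longrightarrow> k \<le> i + m - 1 \<Longrightarrow>
      height q k = height p (i - 1) - int (k - (i - 1))"
    and height_q_up: "i + m - 1 \<le> k \<Longrightarrow> k \<le> i + 2 * m \<Longrightarrow>
      height q k = height p (i - 1) - int m + int (k - (i + m - 1))"
proof -
  let ?H = "height p (i - 1)"
  have p_i: "p i = 1" and p_down: "\<forall>k. i < k \<and> k \<le> i + m \<longrightarrow> p k = -1"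
    and p_up: "\<forall>k. i + m < k \<and> k \<le> i + 2 * m \<longrightarrow> p k = 1"
    using factor unfolding UDU_factor_def by auto
  have "height p i = ?H + 1"
    using p_i height_Suc[of p "i - 1"] i_pos by simp
  then show down: "height p k = ?H + 1 - int (k - i)" if "i \<le> k" "k \<le> i + m" for k
    using height_const_run[OF p_down that] by simp
  show "height p k = ?H + 1 - int m + int (k - i - m)" if "i + m \<le> k" "k \<le> i + 2 * m" for k
    using height_const_run[OF p_up that] down[of "i + m"] by simp
  have q_down: "\<forall>k. i - 1 < k \<and> k \<le> i + m - 1 \<longrightarrow> q k = -1"
    using q_blocks(1) i_pos m_pos by auto
  have q_up: "\<forall>k. i + m - 1 < k \<and> k \<le> i + 2 * m \<longrightarrow> q k = 1"
    using q_blocks(2) i_pos m_pos by auto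
  have "height q (i - 1) = ?H"
    by (rule height_cong) (use move i_pos in auto)
  then show q_down_height: "height q k = ?H - int (k - (i - 1))" if "i - 1 \<le> k" "k \<le> i + m - 1" for k
    using height_const_run[OF q_down that] by simp
  show "height q k = ?H - int m + int (k - (i + m - 1))" if "i + m - 1 \<le> k" "k \<le> i + 2 * m" for k
    using height_const_run[OF q_up that] q_down_height[of "i + m - 1"] i_pos m_pos by simp
qed

lemma height_end: "height q (i + 2 * m) = height p (i + 2 * m)"
  using height_p_up[of "i + 2 * m"] height_q_up[of "i + 2 * m"] m_pos i_pos by simp

lemma agree_outside_window: "\<forall>k. k < i \<or> i + 2 * m < k \<longrightarrow> q k = p k"
  using move m_pos by auto

lemma height_cong_outside_window: "k < i \<or> i + 2 * m \<le> k \<Longrightarrow> height q k = height p k"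
  using height_cong_outside[OF agree_outside_window height_end] .

lemma window_heights_le_end:
  assumes "i - 1 \<le> k" "k \<le> i + 2 * m"
  shows "max (height p k) (height q k) \<le> height p (i + 2 * m)"
proof -
  have "height p k \<le> height p (i + 2 * m)"
    using assms height_p_down[of k] height_p_up[of k] height_p_up[of "i + 2 * m"]
    by (cases "k = i - 1"; cases "k \<le> i + m") auto
  moreover have "height q k \<le> height p (i + 2 * m)"
    using assms height_q_down[of k] height_q_up[of k] height_end height_q_up[of "i + 2 * m"]
    by (cases "k \<le> i + m - 1") auto
  ultimately show ?thesis by simp
qed

lemma eastern_exposed_eq: "eastern_exposed n q = eastern_exposed n p"
proof
  fix j
  show "eastern_exposed n q j = eastern_exposed n p j"
  proof (cases "j < i \<or> i + 2 * m < j")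
    case True
    show ?thesis
      by (rule eastern_exposed_cong_outside[OF agree_outside_window height_end _ i_pos _ window_le True])
        (use window_heights_le_end in auto)
  next
    case False
    then have "i - 1 \<le> j - 1" "j - 1 \<le> i + 2 * m" "j \<le> i + 2 * m" by auto
    then have "\<not> eastern_exposed n r j" if "r = p \<or> r = q" for r
      using that window_heights_le_end[of "j - 1"] height_end window_le
        not_eastern_exposed_if_height_le[of j "i + 2 * m" n r] by auto
    then show ?thesis by simp
  qed
qed

lemma ballot_path_q: "ballot_path n h p \<Longrightarrow> ballot_path n h q"
  unfolding ballot_path_def
proof (elim conjE, intro conjI allI impI)
  fix k assume "\<forall>k\<le>n. height p k \<le> 0" "k \<le> n"
  then show "height q k \<le> 0"
    using height_cong_outside_window[of k] window_heights_le_end[of k] window_le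
    by (cases "k < i \<or> i + 2 * m \<le> k") force+
qed (use move i_pos window_le height_cong_outside_window[of n] in auto)

lemma moment_q: "moment n q = moment n p + 2 * int m"
  using factor m_pos i_pos window_le
  by (simp add: move moment_upd UDU_factor_def algebra_simps)

end

text \<open>The factor D^(m+1) U^m on the steps i, ..., i + 2m becomes D^m U^m D.\<close>
locale DDU_move = window n i m for n i m +
  fixes p q :: "nat \<Rightarrow> int"
  assumes factor: "DDU_factor p i m" and move: "q = p(i + m := 1, i + 2 * m := -1)"
begin

lemma q_blocks:
  shows "i \<le> k \<Longrightarrow> k < i + m \<Longrightarrow> q k = -1"
    and "i + m \<le> k \<Longrightarrow> k < i + 2 * m \<Longrightarrow> q k = 1"
    and "q (i + 2 * m) = -1"
  using factor m_pos unfolding move DDU_factor_def by auto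

lemma heights:
  shows height_p_down: "i - 1 \<le> k \<Longrightarrow> k \<le> i + m \<Longrightarrow>
      height p k = height p (i - 1) - int (k - (i - 1))"
    and height_p_up: "i + m \<le> k \<Longrightarrow> k \<le> i + 2 * m \<Longrightarrow>
      height p k = height p (i - 1) - int m - 1 + int (k - (i + m))"
    and height_q_down: "i - 1 \<le> k \<Longrightarrow> k \<le> i + m - 1 \<Longrightarrow>
      height q k = height p (i - 1) - int (k - (i - 1))"
    and height_q_up: "i + m - 1 \<le> k \<Longrightarrow> k \<le> i + 2 * m - 1 \<Longrightarrow>
      height q k = height p (i - 1) - int m + int (k - (i + m - 1))"
    and height_q_end: "height q (i + 2 * m) = height p (i - 1) - 1"
proof -
  let ?H = "height p (i - 1)"
  have p_down: "\<forall>k. i - 1 < k \<and> k \<le> i + m \<longrightarrow> p k = -1"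
    and p_up: "\<forall>k. i + m < k \<and> k \<le> i + 2 * m \<longrightarrow> p k = 1"
    using factor i_pos unfolding DDU_factor_def by auto
  show down: "height p k = ?H - int (k - (i - 1))" if "i - 1 \<le> k" "k \<le> i + m" for k
    using height_const_run[OF p_down that] by simp
  show "height p k = ?H - int m - 1 + int (k - (i + m))" if "i + m \<le> k" "k \<le> i + 2 * m" for k
    using height_const_run[OF p_up that] down[of "i + m"] i_pos by simp
  have q_down: "\<forall>k. i - 1 < k \<and> k \<le> i + m - 1 \<longrightarrow> q k = -1"
    using q_blocks(1) i_pos m_pos by auto
  have q_up: "\<forall>k. i + m - 1 < k \<and> k \<le> i + 2 * m - 1 \<longrightarrow> q k = 1"
    using q_blocks(2) i_pos m_pos by auto
  have "height q (i - 1) = ?H"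
    by (rule height_cong) (use move i_pos in auto)
  then show q_down_height: "height q k = ?H - int (k - (i - 1))" if "i - 1 \<le> k" "k \<le> i + m - 1" for k
    using height_const_run[OF q_down that] by simp
  show q_up_height: "height q k = ?H - int m + int (k - (i + m - 1))"
    if "i + m - 1 \<le> k" "k \<le> i + 2 * m - 1" for k
    using height_const_run[OF q_up that] q_down_height[of "i + m - 1"] i_pos m_pos by simp
  have "height q (i + 2 * m) = height q (i + 2 * m - 1) + q (i + 2 * m)"
    using height_Suc[of q "i + 2 * m - 1"] m_pos by simp
  then show "height q (i + 2 * m) = ?H - 1"
    using q_up_height[of "i + 2 * m - 1"] q_blocks(3) m_pos i_pos by simp
qed

lemma height_end: "height q (i + 2 * m) = height p (i + 2 * m)"
  using height_p_up[of "i + 2 * m"] height_q_end by simp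

lemma agree_outside_window: "\<forall>k. k < i \<or> i + 2 * m < k \<longrightarrow> q k = p k"
  using move m_pos by auto

lemma height_cong_outside_window: "k < i \<or> i + 2 * m \<le> k \<Longrightarrow> height q k = height p k"
  using height_cong_outside[OF agree_outside_window height_end] .

lemma window_heights_p: "i \<le> k \<Longrightarrow> k \<le> i + 2 * m \<Longrightarrow> height p k \<le> height p (i - 1) - 1"
  using height_p_down[of k] height_p_up[of k] i_pos by (cases "k \<le> i + m") auto

lemma window_heights_q: "i - 1 \<le> k \<Longrightarrow> k \<le> i + 2 * m \<Longrightarrow> height q k \<le> height p (i - 1)"
  using height_q_down[of k] height_q_up[of k] height_q_end
  by (cases "k = i + 2 * m"; cases "k \<le> i + m - 1") auto

lemma height_q_before_end: "height q (i + 2 * m - 1) = height p (i - 1)"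
  using height_q_up[of "i + 2 * m - 1"] m_pos i_pos by simp

lemma not_eastern_exposed_end: "\<not> eastern_exposed n p (i + 2 * m)"
  using factor m_pos unfolding DDU_factor_def eastern_exposed_def by auto

lemma eastern_exposed_inside_window:
  assumes "i \<le> j" "j < i + 2 * m"
  shows "\<not> eastern_exposed n q j" and "i < j \<Longrightarrow> \<not> eastern_exposed n p j"
proof -
  show "\<not> eastern_exposed n q j"
    using assms window_heights_q[of "j - 1"] height_q_before_end window_le
      not_eastern_exposed_if_height_le[of j "i + 2 * m - 1" n q] by simp
  show "\<not> eastern_exposed n p j" if "i < j"
    using that assms window_heights_p[of "j - 1"] window_le
      not_eastern_exposed_if_height_le[of j "i + 2 * m" n p] window_heights_p[of "i + 2 * m"]
    by (simp add: height_p_up)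
qed

lemma eastern_exposed_end_iff: "eastern_exposed n q (i + 2 * m) \<longleftrightarrow> eastern_exposed n p i"
proof -
  let ?H = "height p (i - 1)"
  have "(\<forall>k. i \<le> k \<and> k \<le> n \<longrightarrow> height p k < ?H) \<longleftrightarrow>
      (\<forall>k. i + 2 * m \<le> k \<and> k \<le> n \<longrightarrow> height q k < ?H)"
  proof
    assume q_below: "\<forall>k. i + 2 * m \<le> k \<and> k \<le> n \<longrightarrow> height q k < ?H"
    show "\<forall>k. i \<le> k \<and> k \<le> n \<longrightarrow> height p k < ?H"
    proof (intro allI impI)
      fix k assume k: "i \<le> k \<and> k \<le> n"
      show "height p k < ?H"
      proof (cases "k < i + 2 * m")
        case True
        then show ?thesis using window_heights_p[of k] k by simp
      next
        case False
        then show ?thesis using q_below[rule_format, of k] height_cong_outside_window[of k] k by simp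
      qed
    qed
  qed (use height_cong_outside_window in auto)
  moreover have "p i = -1"
    using factor unfolding DDU_factor_def by simp
  ultimately show ?thesis
    using q_blocks(3) i_pos window_le height_q_before_end m_pos
    unfolding eastern_exposed_def by auto
qed

lemma eastern_exposed_eq:
  "eastern_exposed n q = (eastern_exposed n p)(i := False, i + 2 * m := eastern_exposed n p i)"
proof
  fix j
  consider "j < i \<or> i + 2 * m < j" | "i \<le> j" "j < i + 2 * m" | "j = i + 2 * m"
    by linarith
  then show "eastern_exposed n q j =
      ((eastern_exposed n p)(i := False, i + 2 * m := eastern_exposed n p i)) j"
  proof cases
    case 1
    have "eastern_exposed n q j = eastern_exposed n p j"
      by (rule eastern_exposed_cong_outside[OF agree_outside_window height_end _ i_pos _ window_le 1])
        (use window_heights_p window_heights_q height_end m_pos in force)+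
    then show ?thesis
      using 1 m_pos by auto
  next
    case 2
    then show ?thesis
      using eastern_exposed_inside_window[OF 2] by (cases "j = i") auto
  qed (use eastern_exposed_end_iff in simp)
qed

lemma ballot_path_iff: "ballot_path n h q \<longleftrightarrow> ballot_path n h p"
proof -
  let ?H = "height p (i - 1)"
  have nonpos_iff_outside: "(\<forall>k\<le>n. height r k \<le> 0) \<longleftrightarrow>
      (\<forall>k\<le>n. k < i \<or> i + 2 * m \<le> k \<longrightarrow> height p k \<le> 0)" if "r = p \<or> r = q" for r
  proof
    assume outside: "\<forall>k\<le>n. k < i \<or> i + 2 * m \<le> k \<longrightarrow> height p k \<le> 0"
    then have "?H \<le> 0"
      using outside[rule_format, of "i - 1"] window_le i_pos by simp
    show "\<forall>k\<le>n. height r k \<le> 0"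
    proof (intro allI impI)
      fix k assume "k \<le> n"
      show "height r k \<le> 0"
      proof (cases "k < i \<or> i + 2 * m \<le> k")
        case True
        then show ?thesis
          using outside \<open>k \<le> n\<close> height_cong_outside_window[of k] that by auto
      next
        case False
        then have "i - 1 \<le> k" "i \<le> k" "k \<le> i + 2 * m" by auto
        then show ?thesis
          using \<open>?H \<le> 0\<close> window_heights_p[of k] window_heights_q[of k] that by auto
      qed
    qed
  qed (use that height_cong_outside_window in auto)
  have steps_iff: "(\<forall>k. q k = 1 \<or> (1 \<le> k \<and> k \<le> n \<and> q k = -1)) \<longleftrightarrow>
      (\<forall>k. p k = 1 \<or> (1 \<le> k \<and> k \<le> n \<and> p k = -1))"
  proof -
    have "p (i + m) = -1" "p (i + 2 * m) = 1"
      using factor m_pos unfolding DDU_factor_def by auto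
    then have "q k = 1 \<or> (1 \<le> k \<and> k \<le> n \<and> q k = -1) \<longleftrightarrow>
        p k = 1 \<or> (1 \<le> k \<and> k \<le> n \<and> p k = -1)" for k
      using i_pos window_le by (auto simp: move)
    then show ?thesis by blast
  qed
  show ?thesis
    unfolding ballot_path_def
    using nonpos_iff_outside[of p] nonpos_iff_outside[of q] steps_iff
      height_cong_outside_window[of n] window_le by auto
qed

lemma moment_q: "moment n q = moment n p - 2 * int m"
  using factor m_pos i_pos window_le
  by (simp add: move moment_upd DDU_factor_def algebra_simps)

end

definition path_move :: "nat \<Rightarrow> (nat \<Rightarrow> int) \<Rightarrow> (nat \<Rightarrow> int) \<Rightarrow> bool" where
  "path_move n p q \<longleftrightarrow> (\<exists>i m. UDU_move n i m p q \<or> DDU_move n i m p q)"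

lemma path_move_ballot_path: "path_move n p q \<Longrightarrow> ballot_path n h p \<Longrightarrow> ballot_path n h q"
  unfolding path_move_def using UDU_move.ballot_path_q DDU_move.ballot_path_iff by blast

lemma rtranclp_path_move_ballot_path:
  "(path_move n)\<^sup>*\<^sup>* p q \<Longrightarrow> ballot_path n h p \<Longrightarrow> ballot_path n h q"
  by (induction rule: rtranclp_induct) (auto intro: path_move_ballot_path)

lemma (in DDU_move) exposed_sum_q:
  "exposed_sum n q = (if eastern_exposed n p i then exposed_sum n p + 2 * m else exposed_sum n p)"
proof (cases "eastern_exposed n p i")
  case True
  let ?A = "{j \<in> {1..n}. eastern_exposed n p j}"
  have "{j \<in> {1..n}. eastern_exposed n q j} = insert (i + 2 * m) (?A - {i})"
    using eastern_exposed_eq True i_pos window_le m_pos by auto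
  moreover have "i \<in> ?A" "i + 2 * m \<notin> ?A - {i}"
    using True i_pos window_le not_eastern_exposed_end by auto
  ultimately show ?thesis
    using True sum.remove[of ?A i id] unfolding exposed_sum_def by simp
next
  case False
  then have "eastern_exposed n q = eastern_exposed n p"
    using eastern_exposed_eq not_eastern_exposed_end by (auto simp: fun_eq_iff)
  with False show ?thesis
    unfolding exposed_sum_def by simp
qed

lemma path_move_exposed_sum:
  assumes "path_move n p q"
  shows "eastern_exposed n q = eastern_exposed n p \<or> exposed_sum n p < exposed_sum n q"
  using assms unfolding path_move_def
proof (elim exE disjE)
  fix i m assume "DDU_move n i m p q"
  then interpret DDU_move n i m p q .
  show ?thesis
    using exposed_sum_q eastern_exposed_eq m_pos not_eastern_exposed_end
    by (cases "eastern_exposed n p i") (auto simp: fun_eq_iff)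
qed (use UDU_move.eastern_exposed_eq in blast)

text \<open>Moves never decrease the exposed sum and strictly increase it whenever they change the set
  of eastern-exposed steps, so moves inside a cycle keep that set fixed.\<close>
lemma rtranclp_path_move_exposed_sum:
  assumes "(path_move n)\<^sup>*\<^sup>* p q"
  shows "eastern_exposed n q = eastern_exposed n p \<or> exposed_sum n p < exposed_sum n q"
  using assms
proof (induction rule: rtranclp_induct)
  case (step q r)
  then show ?case
    using path_move_exposed_sum[OF step.hyps(2)] unfolding exposed_sum_def by auto
qed simp

lemma path_move_cycle_eastern_exposed:
  "(path_move n)\<^sup>*\<^sup>* p q \<Longrightarrow> (path_move n)\<^sup>*\<^sup>* q p \<Longrightarrow> eastern_exposed n p = eastern_exposed n q"
  using rtranclp_path_move_exposed_sum[of n p q] rtranclp_path_move_exposed_sum[of n q p] by auto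

lemma first_after:
  fixes P :: "nat \<Rightarrow> bool"
  assumes "P b" and "j < b"
  obtains s where "j < s" "s \<le> b" "P s" "\<forall>k. j < k \<and> k < s \<longrightarrow> \<not> P k"
proof -
  define s where "s = (LEAST k. j < k \<and> P k)"
  have "j < s \<and> P s" "s \<le> b"
    using LeastI[of "\<lambda>k. j < k \<and> P k" b] Least_le[of "\<lambda>k. j < k \<and> P k" b] assms
    unfolding s_def by auto
  moreover have "\<forall>k. j < k \<and> k < s \<longrightarrow> \<not> P k"
    using not_less_Least unfolding s_def by blast
  ultimately show thesis
    using that by blast
qed

lemma last_before:
  fixes P :: "nat \<Rightarrow> bool"
  assumes "P a" and "a < j"
  obtains t where "a \<le> t" "t < j" "P t" "\<forall>k. t < k \<and> k < j \<longrightarrow> \<not> P k"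
proof -
  define t where "t = Max {k. a \<le> k \<and> k < j \<and> P k}"
  have fin: "finite {k. a \<le> k \<and> k < j \<and> P k}"
    by (rule finite_subset[of _ "{..<j}"]) auto
  have t: "t \<in> {k. a \<le> k \<and> k < j \<and> P k}"
    unfolding t_def using assms by (intro Max_in[OF fin]) auto
  moreover have "\<forall>k. t < k \<and> k < j \<longrightarrow> \<not> P k"
  proof (intro allI impI notI)
    fix k assume "t < k \<and> k < j" "P k"
    then have "k \<le> t"
      using t Max_ge[OF fin, of k] unfolding t_def by auto
    with \<open>t < k \<and> k < j\<close> show False by simp
  qed
  ultimately show thesis
    using that by blast
qed

lemma eastern_exposed_if_below_until:
  assumes "1 \<le> j" "j \<le> n" "p j = -1" "j < s"
    and below: "\<forall>k. j \<le> k \<and> k < s \<and> k \<le> n \<longrightarrow> height p k < height p (j - 1)"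
    and next_exposed: "s \<le> n \<Longrightarrow> eastern_exposed n p s"
  shows "eastern_exposed n p j"
  unfolding eastern_exposed_def
proof (intro conjI allI impI)
  fix k assume k: "j \<le> k \<and> k \<le> n"
  show "height p k < height p (j - 1)"
  proof (cases "k < s")
    case False
    then have "height p k < height p (s - 1)"
      using next_exposed k unfolding eastern_exposed_def by auto
    also have "height p (s - 1) < height p (j - 1)"
    proof -
      have "j \<le> s - 1 \<and> s - 1 < s \<and> s - 1 \<le> n"
        using False k \<open>j < s\<close> by auto
      then show ?thesis
        using below by blast
    qed
    finally show ?thesis .
  qed (use below k in auto)
qed (use assms in auto)

text \<open>In a canonical path every peak is eastern exposed; each class of ballot paths with a
  given set of eastern-exposed steps contains exactly one canonical path.\<close>
definition canonical_path :: "nat \<Rightarrow> (nat \<Rightarrow> int) \<Rightarrow> bool" where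
  "canonical_path n p \<longleftrightarrow>
     (\<forall>i. 2 \<le> i \<and> i \<le> n \<and> p (i - 1) = 1 \<and> p i = -1 \<longrightarrow> eastern_exposed n p i)"

lemma down_run_from:
  assumes "ballot_path n h p" and "p j = -1"
  obtains s where "j < s" "s \<le> n + 1" "p s = 1"
    "\<forall>k. j - 1 < k \<and> k \<le> s - 1 \<longrightarrow> p k = -1"
proof -
  have "j \<le> n"
    using ballot_path_down_step[OF assms(1)] assms(2) by force
  obtain s where s: "j < s" "s \<le> n + 1" "p s = 1" "\<forall>k. j < k \<and> k < s \<longrightarrow> p k \<noteq> 1"
    using first_after[of "\<lambda>k. p k = 1" "n + 1" j] ballot_path_up_step_outside[OF assms(1)]
      \<open>j \<le> n\<close> by auto
  moreover have "\<forall>k. j - 1 < k \<and> k \<le> s - 1 \<longrightarrow> p k = -1"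
  proof (intro allI impI)
    fix k assume k: "j - 1 < k \<and> k \<le> s - 1"
    show "p k = -1"
    proof (cases "k = j")
      case False
      then have "j < k" "k < s"
        using k s(1) by auto
      then show ?thesis
        using s(4) ballot_path_down_step[OF assms(1), of k] by auto
    qed (use assms(2) in simp)
  qed
  ultimately show thesis
    using that by blast
qed

lemma up_run_from:
  assumes "ballot_path n h p" and "p j = 1" and "j \<le> n"
  obtains s where "j < s" "s \<le> n + 1" "s \<le> n \<Longrightarrow> p s = -1"
    "\<forall>k. j - 1 < k \<and> k \<le> s - 1 \<longrightarrow> p k = 1"
proof -
  obtain s where s: "j < s" "s \<le> n + 1" "p s = -1 \<or> n < s"
    "\<forall>k. j < k \<and> k < s \<longrightarrow> \<not> (p k = -1 \<or> n < k)"
    using first_after[of "\<lambda>k. p k = -1 \<or> n < k" "n + 1" j] assms(3) by auto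
  moreover have "\<forall>k. j - 1 < k \<and> k \<le> s - 1 \<longrightarrow> p k = 1"
  proof (intro allI impI)
    fix k assume k: "j - 1 < k \<and> k \<le> s - 1"
    show "p k = 1"
    proof (cases "k = j")
      case False
      then have "j < k" "k < s"
        using k s(1) by auto
      then show ?thesis
        using s(4) ballot_path_down_step[OF assms(1), of k] by auto
    qed (use assms(2) in simp)
  qed
  ultimately show thesis
    using that by auto
qed

lemma unexposed_peak_extremes:
  assumes "\<not> canonical_path n p"
  obtains i0 i1 where
    "2 \<le> i0" "i0 \<le> n" "p (i0 - 1) = 1" "p i0 = -1" "\<not> eastern_exposed n p i0"
    "\<And>i. i0 < i \<Longrightarrow> i \<le> n \<Longrightarrow> p (i - 1) = 1 \<Longrightarrow> p i = -1 \<Longrightarrow> eastern_exposed n p i"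
    "2 \<le> i1" "i1 \<le> n" "p (i1 - 1) = 1" "p i1 = -1" "\<not> eastern_exposed n p i1"
    "\<And>i. 2 \<le> i \<Longrightarrow> i < i1 \<Longrightarrow> p (i - 1) = 1 \<Longrightarrow> p i = -1 \<Longrightarrow> eastern_exposed n p i"
proof -
  let ?V = "{i. 2 \<le> i \<and> i \<le> n \<and> p (i - 1) = 1 \<and> p i = -1 \<and> \<not> eastern_exposed n p i}"
  have fin: "finite ?V"
    by (rule finite_subset[of _ "{..n}"]) auto
  have "?V \<noteq> {}"
    using assms unfolding canonical_path_def by auto
  then have max: "Max ?V \<in> ?V" and min: "Min ?V \<in> ?V"
    using Max_in[OF fin] Min_in[OF fin] by blast+
  show thesis
  proof (rule that[of "Max ?V" "Min ?V"])
    fix i assume i: "Max ?V < i" "i \<le> n" "p (i - 1) = 1" "p i = -1"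
    show "eastern_exposed n p i"
    proof (rule ccontr)
      assume "\<not> eastern_exposed n p i"
      with i max have "i \<in> ?V"
        by auto
      then have "i \<le> Max ?V"
        by (rule Max_ge[OF fin])
      with i(1) show False
        by simp
    qed
  next
    fix i assume i: "2 \<le> i" "i < Min ?V" "p (i - 1) = 1" "p i = -1"
    show "eastern_exposed n p i"
    proof (rule ccontr)
      assume "\<not> eastern_exposed n p i"
      with i min have "i \<in> ?V"
        by auto
      then have "Min ?V \<le> i"
        by (rule Min_le[OF fin])
      with i(2) show False
        by simp
    qed
  qed (use max min in auto)
qed

lemma eastern_exposed_if_descent_longer:
  assumes "1 \<le> j" "j \<le> n" "j < s1" "s1 \<le> s2" "s2 - s1 < s1 - j"
    and down: "\<forall>k. j - 1 < k \<and> k \<le> s1 - 1 \<longrightarrow> p k = -1"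
    and up: "\<forall>k. s1 - 1 < k \<and> k \<le> s2 - 1 \<longrightarrow> p k = 1"
    and next_exposed: "s2 \<le> n \<Longrightarrow> eastern_exposed n p s2"
  shows "eastern_exposed n p j"
proof (rule eastern_exposed_if_below_until[of j n p s2])
  let ?H = "height p (j - 1)"
  have height_down: "height p k = ?H - int (k - (j - 1))" if "j - 1 \<le> k" "k \<le> s1 - 1" for k
    using height_const_run[OF down that] by simp
  have height_up: "height p k = height p (s1 - 1) + int (k - (s1 - 1))"
    if "s1 - 1 \<le> k" "k \<le> s2 - 1" for k
    using height_const_run[OF up that] by simp
  show "\<forall>k. j \<le> k \<and> k < s2 \<and> k \<le> n \<longrightarrow> height p k < ?H"
  proof (intro allI impI)
    fix k assume k: "j \<le> k \<and> k < s2 \<and> k \<le> n"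
    show "height p k < ?H"
    proof (cases "k < s1")
      case True
      then have "j - 1 \<le> k" "k \<le> s1 - 1" "j \<le> k"
        using k by auto
      then show ?thesis
        using height_down[of k] assms(1) by simp
    next
      case False
      then have "s1 - 1 \<le> k" "k \<le> s2 - 1" and s: "s1 - 1 \<le> s2 - 1" "j - 1 \<le> s1 - 1"
        using k assms(3) by auto
      then have "height p k \<le> height p (s2 - 1)"
        using height_up[of k] height_up[of "s2 - 1"] assms(3) by (simp add: of_nat_diff)
      also have "\<dots> < ?H"
        using height_up[OF s(1) order.refl] height_down[OF s(2) order.refl] assms(1,3-5) by simp
      finally show ?thesis .
    qed
  qed
  show "p j = -1"
    using down assms(1,3) by simp
qed (use assms in auto)

lemma UDU_move_if_not_canonical:
  assumes bp: "ballot_path n h p" and "\<not> canonical_path n p"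
  obtains i m where "UDU_move n i m p (p(i := -1, i + m := 1))"
proof -
  obtain i0 where i0: "2 \<le> i0" "i0 \<le> n" "p (i0 - 1) = 1" "p i0 = -1" "\<not> eastern_exposed n p i0"
    and later_exposed: "\<And>i. i0 < i \<Longrightarrow> i \<le> n \<Longrightarrow> p (i - 1) = 1 \<Longrightarrow> p i = -1 \<Longrightarrow> eastern_exposed n p i"
    using unexposed_peak_extremes[OF assms(2)] by metis
  obtain s1 where s1: "i0 < s1" "s1 \<le> n + 1" "p s1 = 1"
    and down: "\<forall>k. i0 - 1 < k \<and> k \<le> s1 - 1 \<longrightarrow> p k = -1"
    using down_run_from[OF bp i0(4)] by blast
  have "s1 \<le> n"
  proof (rule ccontr)
    assume "\<not> s1 \<le> n"
    then have "eastern_exposed n p i0"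
      using eastern_exposed_if_descent_longer[OF _ i0(2) s1(1) order.refl _ down] i0(1) s1(1) by simp
    with i0(5) show False ..
  qed
  obtain s2 where s2: "s1 < s2" "s2 \<le> n + 1" "s2 \<le> n \<Longrightarrow> p s2 = -1"
    and up: "\<forall>k. s1 - 1 < k \<and> k \<le> s2 - 1 \<longrightarrow> p k = 1"
    using up_run_from[OF bp s1(3) \<open>s1 \<le> n\<close>] by blast
  have "s1 - i0 \<le> s2 - s1"
  proof (rule ccontr)
    assume "\<not> s1 - i0 \<le> s2 - s1"
    moreover have "eastern_exposed n p s2" if "s2 \<le> n"
      using later_exposed[of s2] that s1(1) s2(1,3) up by simp
    ultimately have "eastern_exposed n p i0"
      using eastern_exposed_if_descent_longer[OF _ i0(2) s1(1) _ _ down up] i0(1) s2(1) by simp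
    with i0(5) show False ..
  qed
  have mid: "i0 - 1 + (s1 - i0) = s1 - 1" and last: "i0 - 1 + 2 * (s1 - i0) \<le> s2 - 1"
    using i0(1) s1(1) \<open>s1 - i0 \<le> s2 - s1\<close> by auto
  show thesis
  proof (rule that[of "i0 - 1" "s1 - i0"], unfold_locales)
    show "UDU_factor p (i0 - 1) (s1 - i0)"
      unfolding UDU_factor_def mid
    proof (intro conjI allI impI)
      fix k assume "i0 - 1 < k \<and> k \<le> s1 - 1"
      then show "p k = -1" using down by blast
    next
      fix k assume "s1 - 1 < k \<and> k \<le> i0 - 1 + 2 * (s1 - i0)"
      then show "p k = 1" using up last by auto
    qed (rule i0(3))
  qed (use i0(1,2) s1(1) s2(2) \<open>s1 - i0 \<le> s2 - s1\<close> in auto)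
qed

lemma valley_before_peak:
  assumes bp: "ballot_path n h p" and "2 \<le> i0" "i0 \<le> n" "p (i0 - 1) = 1"
  obtains t0 t1 where "t0 < t1" "t1 < i0 - 1" "t0 = 0 \<or> p t0 = 1"
    "\<forall>k. t0 < k \<and> k \<le> t1 \<longrightarrow> p k = -1" "\<forall>k. t1 < k \<and> k \<le> i0 - 1 \<longrightarrow> p k = 1"
proof -
  have step: "p k = 1 \<or> p k = -1" for k
    using ballot_path_down_step[OF bp, of k] by auto
  obtain t1 where t1: "t1 < i0 - 1" "t1 = 0 \<or> p t1 = -1"
    and up_free: "\<forall>k. t1 < k \<and> k < i0 - 1 \<longrightarrow> \<not> (k = 0 \<or> p k = -1)"
    using last_before[of "\<lambda>k. k = 0 \<or> p k = -1" 0 "i0 - 1"] assms(2) by auto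
  have up: "\<forall>k. t1 < k \<and> k \<le> i0 - 1 \<longrightarrow> p k = 1"
    using up_free assms(4) step by (metis le_neq_implies_less)
  have "t1 \<noteq> 0"
  proof
    assume "t1 = 0"
    then have "0 < height p (i0 - 1)"
      using height_const_run[OF up, of "i0 - 1"] t1(1) by simp
    moreover have "height p (i0 - 1) \<le> 0"
      using bp assms(3) unfolding ballot_path_def by simp
    ultimately show False
      by simp
  qed
  then have "p t1 = -1"
    using t1(2) by simp
  obtain t0 where t0: "t0 < t1" "t0 = 0 \<or> p t0 = 1"
    and down_free: "\<forall>k. t0 < k \<and> k < t1 \<longrightarrow> \<not> (k = 0 \<or> p k = 1)"
    using last_before[of "\<lambda>k. k = 0 \<or> p k = 1" 0 t1] \<open>t1 \<noteq> 0\<close> by auto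
  have down: "\<forall>k. t0 < k \<and> k \<le> t1 \<longrightarrow> p k = -1"
    using down_free \<open>p t1 = -1\<close> step by (metis le_neq_implies_less)
  show thesis
    by (rule that[OF t0(1) t1(1) t0(2) down up])
qed

lemma DDU_move_onto_of_runs:
  assumes "t0 < t1" "t1 < i0 - 1" "i0 \<le> n" "p i0 = -1"
    and down: "\<forall>k. t0 < k \<and> k \<le> t1 \<longrightarrow> p k = -1" and up: "\<forall>k. t1 < k \<and> k \<le> i0 - 1 \<longrightarrow> p k = 1"
    and b: "b = i0 - 1 - t1" "b \<le> t1 - t0"
  shows "DDU_move n (t1 + 1 - b) b (p(t1 + 1 := -1, i0 := 1)) p"
proof -
  let ?i = "t1 + 1 - b" and ?q = "p(t1 + 1 := -1, i0 := 1)"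
  have i: "1 \<le> ?i" "?i + b = t1 + 1" "?i + 2 * b = i0" "t0 < ?i" "1 \<le> b"
    using assms by auto
  show ?thesis
  proof (unfold_locales)
    show "DDU_factor ?q ?i b"
      unfolding DDU_factor_def
    proof (intro conjI allI impI)
      fix k assume "?i \<le> k \<and> k \<le> ?i + b"
      then show "?q k = -1"
        using down i assms(2) by (cases "k = t1 + 1") auto
    next
      fix k assume "?i + b < k \<and> k \<le> ?i + 2 * b"
      then show "?q k = 1"
        using up i by (cases "k = i0") auto
    qed
    have "p (t1 + 1) = 1"
      using up assms(2) by simp
    then show "p = ?q(?i + b := 1, ?i + 2 * b := -1)"
      using i assms(4) by (auto simp: fun_eq_iff)
  qed (use i assms(3) in auto)
qed

lemma DDU_move_onto_if_not_canonical:
  assumes bp: "ballot_path n h p" and "\<not> canonical_path n p"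
  obtains i m q where "DDU_move n i m q p" and "\<not> eastern_exposed n p (i + 2 * m)"
proof -
  obtain i0 where i0: "2 \<le> i0" "i0 \<le> n" "p (i0 - 1) = 1" "p i0 = -1" "\<not> eastern_exposed n p i0"
    and earlier_exposed: "\<And>i. 2 \<le> i \<Longrightarrow> i < i0 \<Longrightarrow> p (i - 1) = 1 \<Longrightarrow> p i = -1 \<Longrightarrow> eastern_exposed n p i"
    using unexposed_peak_extremes[OF assms(2)] by metis
  obtain t0 t1 where t: "t0 < t1" "t1 < i0 - 1" "t0 = 0 \<or> p t0 = 1"
    and down: "\<forall>k. t0 < k \<and> k \<le> t1 \<longrightarrow> p k = -1" and up: "\<forall>k. t1 < k \<and> k \<le> i0 - 1 \<longrightarrow> p k = 1"
    using valley_before_peak[OF bp i0(1-3)] by blast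
  have "height p (i0 - 1) \<le> height p t0"
  proof (cases "t0 = 0")
    case True
    then show ?thesis
      using bp i0(2) unfolding ballot_path_def by simp
  next
    case False
    then have "eastern_exposed n p (t0 + 1)"
      using earlier_exposed[of "t0 + 1"] t down by simp
    moreover have "t0 + 1 \<le> i0 - 1" "i0 - 1 \<le> n"
      using t i0(2) by auto
    ultimately show ?thesis
      unfolding eastern_exposed_def by fastforce
  qed
  moreover have "height p (i0 - 1) = height p t0 - int (t1 - t0) + int (i0 - 1 - t1)"
    using height_const_run[OF down, of t1] height_const_run[OF up, of "i0 - 1"] t(1,2) by simp
  ultimately have "i0 - 1 - t1 \<le> t1 - t0"
    by simp
  then have "DDU_move n (t1 + 1 - (i0 - 1 - t1)) (i0 - 1 - t1) (p(t1 + 1 := -1, i0 := 1)) p"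
    by (rule DDU_move_onto_of_runs[OF t(1,2) i0(2,4) down up refl])
  moreover have "t1 + 1 - (i0 - 1 - t1) + 2 * (i0 - 1 - t1) = i0"
    using \<open>i0 - 1 - t1 \<le> t1 - t0\<close> t(2) by simp
  ultimately show thesis
    using that i0(5) by metis
qed

text \<open>Both normalisations terminate because every move used raises the moment, which is
  bounded on ballot paths.\<close>
lemma path_move_to_canonical:
  assumes "ballot_path n h p"
  obtains c where "(path_move n)\<^sup>*\<^sup>* p c" "canonical_path n c" "ballot_path n h c"
    "eastern_exposed n c = eastern_exposed n p"
  using assms
proof (induction "nat ((\<Sum>k = 1..n. int k) - moment n p)" arbitrary: p rule: less_induct)
  case less
  show ?case
  proof (cases "canonical_path n p")
    case False
    then obtain i m where mv: "UDU_move n i m p (p(i := -1, i + m := 1))"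
      using UDU_move_if_not_canonical[OF less.prems(2)] by blast
    let ?q = "p(i := -1, i + m := 1)"
    interpret UDU_move n i m p ?q by (rule mv)
    have "path_move n p ?q"
      unfolding path_move_def using mv by blast
    moreover have "nat ((\<Sum>k = 1..n. int k) - moment n ?q) < nat ((\<Sum>k = 1..n. int k) - moment n p)"
      using moment_q moment_le[OF ballot_path_q[OF less.prems(2)]] m_pos by simp
    ultimately show ?thesis
      using less.hyps[OF _ _ ballot_path_q[OF less.prems(2)]] less.prems(1) eastern_exposed_eq
      by (metis converse_rtranclp_into_rtranclp)
  qed (use less.prems in blast)
qed

lemma path_move_from_canonical:
  assumes "ballot_path n h p"
  obtains c where "(path_move n)\<^sup>*\<^sup>* c p" "canonical_path n c" "ballot_path n h c"
    "eastern_exposed n c = eastern_exposed n p"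
  using assms
proof (induction "nat ((\<Sum>k = 1..n. int k) - moment n p)" arbitrary: p rule: less_induct)
  case less
  show ?case
  proof (cases "canonical_path n p")
    case False
    then obtain i m q where mv: "DDU_move n i m q p" and not_exposed: "\<not> eastern_exposed n p (i + 2 * m)"
      using DDU_move_onto_if_not_canonical[OF less.prems(2)] by blast
    interpret DDU_move n i m q p by (rule mv)
    have bq: "ballot_path n h q"
      using ballot_path_iff less.prems(2) by simp
    have "eastern_exposed n p = eastern_exposed n q"
      using eastern_exposed_eq not_exposed not_eastern_exposed_end by (auto simp: fun_eq_iff)
    moreover have "path_move n q p"
      unfolding path_move_def using mv by blast
    moreover have "nat ((\<Sum>k = 1..n. int k) - moment n q) < nat ((\<Sum>k = 1..n. int k) - moment n p)"
      using moment_q moment_le[OF bq] m_pos by simp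
    ultimately show ?thesis
      using less.hyps[OF _ _ bq] less.prems(1) by (metis rtranclp.rtrancl_into_rtrancl)
  qed (use less.prems in blast)
qed

definition suffix_max :: "nat \<Rightarrow> (nat \<Rightarrow> int) \<Rightarrow> nat \<Rightarrow> int" where
  "suffix_max n p t = Max (height p ` {t..n})"

lemma suffix_max_ge: "t \<le> k \<Longrightarrow> k \<le> n \<Longrightarrow> height p k \<le> suffix_max n p t"
  unfolding suffix_max_def by (rule Max_ge) auto

lemma suffix_max_le:
  "t \<le> n \<Longrightarrow> (\<And>k. t \<le> k \<Longrightarrow> k \<le> n \<Longrightarrow> height p k \<le> M) \<Longrightarrow> suffix_max n p t \<le> M"
  unfolding suffix_max_def by (subst Max_le_iff) auto

lemma suffix_max_last: "suffix_max n p n = height p n"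
  unfolding suffix_max_def by simp

lemma suffix_max_Suc:
  assumes "t < n"
  shows "suffix_max n p t = max (height p t) (suffix_max n p (Suc t))"
proof -
  have "{t..n} = insert t {Suc t..n}"
    using assms by auto
  then show ?thesis
    unfolding suffix_max_def using assms by (simp add: Max_insert)
qed

lemma eastern_exposed_iff_suffix_max:
  assumes bp: "ballot_path n h p" and "t < n"
  shows "eastern_exposed n p (Suc t) \<longleftrightarrow> suffix_max n p (Suc t) < height p t"
proof
  assume "eastern_exposed n p (Suc t)"
  then show "suffix_max n p (Suc t) < height p t"
    unfolding eastern_exposed_def suffix_max_def using assms(2) by (subst Max_less_iff) auto
next
  assume below: "suffix_max n p (Suc t) < height p t"
  then have "height p (Suc t) < height p t"
    using suffix_max_ge[of "Suc t" "Suc t" n p] assms(2) by simp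
  then have "p (Suc t) = -1"
    using ballot_path_down_step[OF bp, of "Suc t"] by (auto simp: height_Suc)
  then show "eastern_exposed n p (Suc t)"
    unfolding eastern_exposed_def using below suffix_max_ge[of "Suc t" _ n p] assms(2)
    by fastforce
qed

text \<open>The suffix maxima, and hence the heights at the eastern-exposed steps, are determined by
  the set of eastern-exposed steps and the final height.\<close>
lemma suffix_max_Suc_exposed:
  assumes "ballot_path n h p" and "t < n"
  shows "suffix_max n p t = suffix_max n p (Suc t) + (if eastern_exposed n p (Suc t) then 1 else 0)"
proof (cases "eastern_exposed n p (Suc t)")
  case True
  then have "p (Suc t) = -1" and "suffix_max n p (Suc t) < height p t"
    using eastern_exposed_iff_suffix_max[OF assms] unfolding eastern_exposed_def by auto
  moreover have "height p (Suc t) \<le> suffix_max n p (Suc t)"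
    using suffix_max_ge[of "Suc t" "Suc t" n p] assms(2) by simp
  ultimately show ?thesis
    using True suffix_max_Suc[OF assms(2), of p] by (simp add: height_Suc)
qed (use eastern_exposed_iff_suffix_max[OF assms] suffix_max_Suc[OF assms(2), of p] in simp)

lemma suffix_max_eq_if_eastern_exposed_eq:
  assumes "ballot_path n h p" "ballot_path n h q" "eastern_exposed n p = eastern_exposed n q"
    and "t \<le> n"
  shows "suffix_max n p t = suffix_max n q t"
  using assms(4)
proof (induction rule: inc_induct)
  case base
  then show ?case
    using assms(1,2) by (simp add: suffix_max_last ballot_path_def)
next
  case (step t)
  then show ?case
    using suffix_max_Suc_exposed[OF assms(1)] suffix_max_Suc_exposed[OF assms(2)] assms(3) by simp
qed

lemma height_at_eastern_exposed_eq:
  assumes "ballot_path n h p" "ballot_path n h q" "eastern_exposed n p = eastern_exposed n q"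
    and "eastern_exposed n p s"
  shows "height p (s - 1) = height q (s - 1)"
proof -
  have s: "s - 1 < n" "Suc (s - 1) = s"
    using assms(4) unfolding eastern_exposed_def by auto
  have "suffix_max n r (s - 1) = height r (s - 1)" if "ballot_path n h r" "eastern_exposed n r s" for r
    using eastern_exposed_iff_suffix_max[OF that(1) s(1)] suffix_max_Suc[OF s(1), of r] that(2) s(2)
    by simp
  then show ?thesis
    using suffix_max_eq_if_eastern_exposed_eq[OF assms(1-3), of "s - 1"] assms s by fastforce
qed

lemma canonical_up_run:
  assumes bp: "ballot_path n h p" and cp: "canonical_path n p"
    and "p j = 1" "1 \<le> j" "e \<le> n" and no_exposed: "\<forall>k. j < k \<and> k \<le> e \<longrightarrow> \<not> eastern_exposed n p k"
    and "j \<le> k"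
  shows "k \<le> e \<Longrightarrow> p k = 1"
  using \<open>j \<le> k\<close>
proof (induction k rule: dec_induct)
  case (step k)
  show ?case
  proof (rule ccontr)
    assume "p (Suc k) \<noteq> 1"
    then have "p (Suc k) = -1"
      using ballot_path_down_step[OF bp] by blast
    then have "eastern_exposed n p (Suc k)"
      using cp step assms(3-5) unfolding canonical_path_def by auto
    with no_exposed step show False by auto
  qed
qed (use assms(3) in simp)

text \<open>Used against a second canonical path that goes up at step j: that path keeps climbing
  up to the returned step s, ending strictly higher.\<close>
lemma canonical_descent:
  assumes bq: "ballot_path n h q" and cq: "canonical_path n q"
    and qj: "q j = -1" and not_exposed: "\<not> eastern_exposed n q j"
  obtains s where "j < s" "s \<le> n + 1" "height q (s - 1) < height q (j - 1) + int (s - j)"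
    "\<forall>k. j < k \<and> k < s \<longrightarrow> \<not> eastern_exposed n q k" "s \<le> n \<Longrightarrow> eastern_exposed n q s"
proof -
  let ?H = "height q (j - 1)"
  have j: "1 \<le> j" "j \<le> n"
    using ballot_path_down_step[OF bq, of j] qj by auto
  obtain u where u: "j < u" "u \<le> n + 1" "q u = 1"
    and down: "\<forall>k. j - 1 < k \<and> k \<le> u - 1 \<longrightarrow> q k = -1"
    using down_run_from[OF bq qj] by blast
  have "u \<le> n"
    using eastern_exposed_if_descent_longer[OF j u(1) order.refl _ down] not_exposed u(1) by force
  obtain s where s: "u < s" "s \<le> n + 1" "s \<le> n \<Longrightarrow> q s = -1"
    and up: "\<forall>k. u - 1 < k \<and> k \<le> s - 1 \<longrightarrow> q k = 1"
    using up_run_from[OF bq u(3) \<open>u \<le> n\<close>] by blast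
  have s_exposed: "eastern_exposed n q s" if "s \<le> n"
    using cq s(3)[OF that] up u(1) s(1) that unfolding canonical_path_def by auto
  have "u - j \<le> s - u"
    using eastern_exposed_if_descent_longer[OF j u(1) _ _ down up] s_exposed not_exposed s(1)
    by fastforce
  let ?G = "height q (s - 1)"
  have below_down: "height q k < ?H" if "j \<le> k" "k \<le> u - 1" for k
    using height_const_run[OF down, of k] that j(1) by simp
  have G: "?G = ?H - int (u - j) + int (s - u)"
    using height_const_run[OF up, of "s - 1"] height_const_run[OF down, of "u - 1"] u(1) s(1) j(1)
    by (simp add: of_nat_diff)
  show thesis
  proof (rule that)
    show "?G < ?H + int (s - j)"
      using G u(1) s(1) by simp
    show "\<forall>k. j < k \<and> k < s \<longrightarrow> \<not> eastern_exposed n q k"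
    proof (intro allI impI notI)
      fix k assume k: "j < k \<and> k < s" and exposed: "eastern_exposed n q k"
      show False
      proof (cases "k \<le> u - 1")
        case True
        have "k \<le> s - 1" "s - 1 \<le> n" "j \<le> k - 1" "k - 1 \<le> u - 1"
          using k s(2) True by auto
        then have "?G < height q (k - 1)" "height q (k - 1) < ?H"
          using exposed below_down unfolding eastern_exposed_def by blast+
        then show False
          using G \<open>u - j \<le> s - u\<close> by simp
      next
        case False
        then show False
          using exposed up k unfolding eastern_exposed_def by auto
      qed
    qed
  qed (use s u s_exposed in auto)
qed

lemma canonical_paths_agree_at_divergence:
  assumes bp: "ballot_path n h p" and bq: "ballot_path n h q"
    and cp: "canonical_path n p" and cq: "canonical_path n q"
    and same_exposed: "eastern_exposed n p = eastern_exposed n q"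
    and agree: "\<forall>k<j. p k = q k" and pj: "p j = 1" and qj: "q j = -1"
  shows False
proof -
  have "\<not> eastern_exposed n q j"
    using same_exposed pj unfolding eastern_exposed_def by (metis one_neq_neg_one)
  then obtain s where s: "j < s" "s \<le> n + 1" "height q (s - 1) < height q (j - 1) + int (s - j)"
    and no_exposed: "\<forall>k. j < k \<and> k < s \<longrightarrow> \<not> eastern_exposed n q k"
    and s_exposed: "s \<le> n \<Longrightarrow> eastern_exposed n q s"
    using canonical_descent[OF bq cq qj] by blast
  have j: "1 \<le> j"
    using ballot_path_down_step[OF bq, of j] qj by auto
  have "height p (j - 1) = height q (j - 1)"
    using agree j by (intro height_cong) auto
  moreover have "height p (s - 1) = height p (j - 1) + int (s - j)"
  proof -
    have no_exposed_p: "\<forall>k. j < k \<and> k \<le> s - 1 \<longrightarrow> \<not> eastern_exposed n p k"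
      using no_exposed same_exposed by auto
    have "\<forall>k. j - 1 < k \<and> k \<le> s - 1 \<longrightarrow> p k = 1"
      using canonical_up_run[OF bp cp pj j _ no_exposed_p] s(2) j by auto
    then show ?thesis
      using height_const_run[of "j - 1" "s - 1" p 1 "s - 1"] s(1) j by simp
  qed
  moreover have "height p (s - 1) = height q (s - 1)"
  proof (cases "s \<le> n")
    case True
    then show ?thesis
      using height_at_eastern_exposed_eq[OF bp bq same_exposed] s_exposed same_exposed by simp
  next
    case False
    then have "s - 1 = n"
      using s(2) by simp
    then show ?thesis
      using bp bq unfolding ballot_path_def by simp
  qed
  ultimately show False
    using s(3) by simp
qed

lemma canonical_path_unique:
  assumes bp: "ballot_path n h p" and bq: "ballot_path n h q"
    and cp: "canonical_path n p" and cq: "canonical_path n q"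
    and same_exposed: "eastern_exposed n p = eastern_exposed n q"
  shows "p = q"
proof (rule ccontr)
  assume "p \<noteq> q"
  then obtain j where j: "p j \<noteq> q j" and agree: "\<forall>k<j. p k = q k"
    using exists_least_iff[of "\<lambda>k. p k \<noteq> q k"] by (auto simp: fun_eq_iff)
  then consider "p j = 1" "q j = -1" | "q j = 1" "p j = -1"
    using ballot_path_down_step[OF bp, of j] ballot_path_down_step[OF bq, of j] by force
  then show False
  proof cases
    case 1
    then show False
      using canonical_paths_agree_at_divergence[OF bp bq cp cq same_exposed agree] by blast
  next
    case 2
    then show False
      using canonical_paths_agree_at_divergence[OF bq bp cq cp same_exposed[symmetric]] agree
      by (metis)
  qed
qed

lemma path_move_connected:
  assumes "ballot_path n h p" and "ballot_path n h q"
    and "eastern_exposed n p = eastern_exposed n q"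
  shows "(path_move n)\<^sup>*\<^sup>* p q"
proof -
  obtain c where c: "(path_move n)\<^sup>*\<^sup>* p c" "canonical_path n c" "ballot_path n h c"
    "eastern_exposed n c = eastern_exposed n p"
    using path_move_to_canonical[OF assms(1)] by blast
  obtain d where d: "(path_move n)\<^sup>*\<^sup>* d q" "canonical_path n d" "ballot_path n h d"
    "eastern_exposed n d = eastern_exposed n q"
    using path_move_from_canonical[OF assms(2)] by blast
  have "c = d"
    using canonical_path_unique[OF c(3) d(3) c(2) d(2)] c(4) d(4) assms(3) by simp
  with c(1) d(1) show ?thesis by simp
qed

lemma strict_sorted_unique:
  fixes xs ys :: "'a::linorder list"
  assumes "sorted_wrt (<) xs" "sorted_wrt (<) ys" "set xs = set ys"
  shows "xs = ys"
  using assms sorted_distinct_set_unique by (auto simp: strict_sorted_iff)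

lemma strict_sorted_nth_le_iff_card:
  fixes r :: "nat list"
  assumes s: "sorted_wrt (<) r" and j: "j < length r"
  shows "r ! j \<le> k \<longleftrightarrow> j < card {x \<in> set r. x \<le> k}"
proof
  assume A: "r ! j \<le> k"
  have "set (take (Suc j) r) \<subseteq> {x \<in> set r. x \<le> k}"
  proof
    fix x assume "x \<in> set (take (Suc j) r)"
    then obtain i where "i < length (take (Suc j) r)" "x = take (Suc j) r ! i"
      by (auto simp: in_set_conv_nth)
    then have i: "i \<le> j" "x = r ! i"
      using j by auto
    have "r ! i \<le> r ! j"
      using i(1) s j by (cases "i = j") (auto simp: sorted_wrt_nth_less less_imp_le)
    then show "x \<in> {x \<in> set r. x \<le> k}"
      using i A j by auto
  qed
  then have "card (set (take (Suc j) r)) \<le> card {x \<in> set r. x \<le> k}"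
    by (intro card_mono) simp_all
  moreover have "card (set (take (Suc j) r)) = Suc j"
    using s j by (simp add: distinct_card strict_sorted_iff)
  ultimately show "j < card {x \<in> set r. x \<le> k}"
    by simp
next
  assume A: "j < card {x \<in> set r. x \<le> k}"
  show "r ! j \<le> k"
  proof (rule ccontr)
    assume "\<not> r ! j \<le> k"
    have "{x \<in> set r. x \<le> k} \<subseteq> set (take j r)"
    proof
      fix x assume x: "x \<in> {x \<in> set r. x \<le> k}"
      then obtain i where i: "i < length r" "x = r ! i"
        by (auto simp: in_set_conv_nth)
      have "i < j"
      proof (rule ccontr)
        assume "\<not> i < j"
        then have "r ! j \<le> r ! i"
          using s i j by (cases "i = j") (auto simp: sorted_wrt_nth_less less_imp_le)
        then show False
          using x i \<open>\<not> r ! j \<le> k\<close> by auto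
      qed
      then show "x \<in> set (take j r)"
        using i by (auto simp: in_set_conv_nth)
    qed
    then have "card {x \<in> set r. x \<le> k} \<le> card (set (take j r))"
      by (simp add: card_mono)
    also have "\<dots> \<le> j"
      using card_length[of "take j r"] by simp
    finally show False
      using A by simp
  qed
qed

lemma height_eq_card_diff:
  assumes "\<forall>x. 1 \<le> x \<and> x \<le> k \<longrightarrow> p x = 1 \<or> p x = -1"
  shows "height p k = int (card {x \<in> {1..k}. p x = 1}) - int (card {x \<in> {1..k}. p x = -1})"
  using assms
proof (induction k)
  case (Suc k)
  have split: "{x \<in> {1..Suc k}. P x} =
      (if P (Suc k) then insert (Suc k) {x \<in> {1..k}. P x} else {x \<in> {1..k}. P x})" for P
    by (auto simp: le_Suc_eq)
  have "p (Suc k) = 1 \<or> p (Suc k) = -1"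
    using Suc.prems by simp
  then show ?case
    using Suc split[of "\<lambda>x. p x = 1"] split[of "\<lambda>x. p x = -1"] by (auto simp: height_Suc)
qed simp

lemma SYT_rows:
  assumes "(r1, r2) \<in> SYT l1 l2"
  shows "length r1 = l1" "length r2 = l2" "sorted_wrt (<) r1" "sorted_wrt (<) r2"
    "set r1 \<union> set r2 = {1..l1 + l2}" "\<forall>j<l2. r1 ! j < r2 ! j" "set r1 \<inter> set r2 = {}"
proof -
  show l: "length r1 = l1" "length r2 = l2" and s: "sorted_wrt (<) r1" "sorted_wrt (<) r2"
    and u: "set r1 \<union> set r2 = {1..l1 + l2}" and "\<forall>j<l2. r1 ! j < r2 ! j"
    using assms unfolding SYT_def by auto
  have "card (set r1) = l1" "card (set r2) = l2"
    using l s by (simp_all add: distinct_card strict_sorted_iff)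
  then have "card (set r1 \<inter> set r2) = 0"
    using card_Un_Int[of "set r1" "set r2"] u by simp
  then show "set r1 \<inter> set r2 = {}"
    by simp
qed

lemma path_of_SYT:
  assumes "(r1, r2) \<in> SYT l1 l2"
  shows "x \<in> set r1 \<longleftrightarrow> 1 \<le> x \<and> x \<le> l1 + l2 \<and> path_of (r1, r2) x = -1"
    and "x \<in> set r2 \<longleftrightarrow> 1 \<le> x \<and> x \<le> l1 + l2 \<and> path_of (r1, r2) x = 1"
  using SYT_rows[OF assms] unfolding path_of_def by (auto simp: set_eq_iff)

lemma set_filter_upt: "set (filter P [1..<n + 1]) = {k. 1 \<le> k \<and> k \<le> n \<and> P k}"
  by auto

lemma sorted_filter_upt: "sorted_wrt (<) (filter P [a..<b])"
  by (rule sorted_wrt_filter) simp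

definition tab_of_path :: "nat \<Rightarrow> (nat \<Rightarrow> int) \<Rightarrow> tab" where
  "tab_of_path n p = (filter (\<lambda>k. p k = -1) [1..<n + 1], filter (\<lambda>k. p k = 1) [1..<n + 1])"

lemma height_path_of_rows:
  assumes "set r1 \<inter> set r2 = {}" and "set r1 \<union> set r2 = {1..n}" and "k \<le> n"
  shows "height (path_of (r1, r2)) k =
    int (card {x \<in> set r2. x \<le> k}) - int (card {x \<in> set r1. x \<le> k})"
proof -
  let ?p = "path_of (r1, r2)"
  have "{x \<in> {1..k}. ?p x = -1} = {x \<in> set r1. x \<le> k}" "{x \<in> {1..k}. ?p x = 1} = {x \<in> set r2. x \<le> k}"
    using assms unfolding path_of_def by auto
  then show ?thesis
    using height_eq_card_diff[of k ?p] unfolding path_of_def by auto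
qed

lemma columns_iff_counts:
  fixes r1 r2 :: "nat list"
  assumes s1: "sorted_wrt (<) r1" and s2: "sorted_wrt (<) r2" and "set r1 \<inter> set r2 = {}"
    and "length r2 \<le> length r1"
  shows "(\<forall>j<length r2. r1 ! j < r2 ! j) \<longleftrightarrow>
    (\<forall>k. card {x \<in> set r2. x \<le> k} \<le> card {x \<in> set r1. x \<le> k})"
proof
  assume columns: "\<forall>j<length r2. r1 ! j < r2 ! j"
  show "\<forall>k. card {x \<in> set r2. x \<le> k} \<le> card {x \<in> set r1. x \<le> k}"
  proof (rule allI, rule ccontr)
    fix k
    let ?j = "card {x \<in> set r1. x \<le> k}"
    assume "\<not> card {x \<in> set r2. x \<le> k} \<le> ?j"
    moreover have "card {x \<in> set r2. x \<le> k} \<le> length r2"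
      using card_length[of r2] card_mono[of "set r2" "{x \<in> set r2. x \<le> k}"] by simp
    ultimately have "?j < length r2" "r2 ! ?j \<le> k" "\<not> r1 ! ?j \<le> k"
      using strict_sorted_nth_le_iff_card[OF s2, of ?j k]
        strict_sorted_nth_le_iff_card[OF s1, of ?j k] assms(4) by auto
    with columns show False
      by force
  qed
next
  assume counts: "\<forall>k. card {x \<in> set r2. x \<le> k} \<le> card {x \<in> set r1. x \<le> k}"
  show "\<forall>j<length r2. r1 ! j < r2 ! j"
  proof (intro allI impI)
    fix j assume j: "j < length r2"
    then have "j < card {x \<in> set r1. x \<le> r2 ! j}"
      using strict_sorted_nth_le_iff_card[OF s2 j, of "r2 ! j"] counts by (meson order.refl order_less_le_trans)
    then have "r1 ! j \<le> r2 ! j"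
      using strict_sorted_nth_le_iff_card[OF s1, of j] j assms(4) by simp
    moreover have "r1 ! j \<noteq> r2 ! j"
      using assms(3,4) j nth_mem[of j r1] nth_mem[OF j] by force
    ultimately show "r1 ! j < r2 ! j"
      by simp
  qed
qed

lemma SYT_ballot_path:
  assumes T: "T \<in> SYT l1 l2" and "l2 \<le> l1"
  shows "ballot_path (l1 + l2) (int l2 - int l1) (path_of T)"
    and "tab_of_path (l1 + l2) (path_of T) = T"
proof -
  obtain r1 r2 where TT: "T = (r1, r2)"
    by (cases T)
  let ?n = "l1 + l2" and ?p = "path_of T"
  note rows = SYT_rows[OF T[unfolded TT]]
  note height = height_path_of_rows[OF rows(7,5), folded TT]
  have p: "?p k = (if k \<in> set r1 then -1 else 1)" for k
    unfolding path_of_def TT by simp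
  have "height ?p k \<le> 0" if "k \<le> ?n" for k
    using columns_iff_counts[OF rows(3,4,7)] rows(1,2,6) assms(2) height[OF that] by simp
  moreover have "height ?p ?n = int l2 - int l1"
  proof -
    have "{x \<in> set r2. x \<le> ?n} = set r2" "{x \<in> set r1. x \<le> ?n} = set r1"
      using rows(5) by auto
    then show ?thesis
      using height[of ?n] rows(1-4) by (simp add: distinct_card strict_sorted_iff)
  qed
  ultimately show "ballot_path ?n (int l2 - int l1) ?p"
    unfolding ballot_path_def using p rows(5) by auto
  have "set (filter (\<lambda>k. ?p k = -1) [1..<?n + 1]) = set r1"
    "set (filter (\<lambda>k. ?p k = 1) [1..<?n + 1]) = set r2"
    unfolding set_filter_upt using p rows(5,7) by auto
  then have "filter (\<lambda>k. ?p k = -1) [1..<?n + 1] = r1" "filter (\<lambda>k. ?p k = 1) [1..<?n + 1] = r2"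
    using rows(3,4) sorted_filter_upt strict_sorted_unique by blast+
  then show "tab_of_path ?n ?p = T"
    unfolding tab_of_path_def TT by simp
qed

lemma ballot_path_SYT:
  assumes bp: "ballot_path (l1 + l2) (int l2 - int l1) p" and "l2 \<le> l1"
  shows "tab_of_path (l1 + l2) p \<in> SYT l1 l2" and "path_of (tab_of_path (l1 + l2) p) = p"
proof -
  let ?n = "l1 + l2"
  define r1 where "r1 = filter (\<lambda>k. p k = -1) [1..<?n + 1]"
  define r2 where "r2 = filter (\<lambda>k. p k = 1) [1..<?n + 1]"
  have T: "tab_of_path ?n p = (r1, r2)"
    unfolding tab_of_path_def r1_def r2_def by simp
  have steps: "\<forall>k. p k = 1 \<or> (1 \<le> k \<and> k \<le> ?n \<and> p k = -1)"
    using bp unfolding ballot_path_def by auto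
  have set_r1: "set r1 = {k. 1 \<le> k \<and> k \<le> ?n \<and> p k = -1}"
    and set_r2: "set r2 = {k. 1 \<le> k \<and> k \<le> ?n \<and> p k = 1}"
    unfolding r1_def r2_def set_filter_upt by simp_all
  have sorted: "sorted_wrt (<) r1" "sorted_wrt (<) r2"
    unfolding r1_def r2_def by (rule sorted_filter_upt)+
  have path: "path_of (r1, r2) = p"
  proof
    fix k
    show "path_of (r1, r2) k = p k"
      using steps[rule_format, of k] set_r1 unfolding path_of_def by auto
  qed
  have disjoint: "set r1 \<inter> set r2 = {}" and union: "set r1 \<union> set r2 = {1..?n}"
    using set_r1 set_r2 steps by auto
  note height = height_path_of_rows[OF this, unfolded path]
  have total: "{y \<in> set r. y \<le> k} = set r" if "?n \<le> k" "r = r1 \<or> r = r2" for r k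
    using that set_r1 set_r2 by auto
  have "card (set r1) + card (set r2) = ?n"
    using card_Un_disjoint[of "set r1" "set r2"] disjoint union by simp
  moreover have "int (card (set r2)) - int (card (set r1)) = int l2 - int l1"
    using height[of ?n] total[of ?n] bp unfolding ballot_path_def by simp
  ultimately have len: "length r1 = l1" "length r2 = l2"
    using sorted by (simp_all add: distinct_card strict_sorted_iff)
  have "card {x \<in> set r2. x \<le> k} \<le> card {x \<in> set r1. x \<le> k}" for k
  proof (cases "k \<le> ?n")
    case True
    then have "height p k \<le> 0"
      using bp unfolding ballot_path_def by simp
    then show ?thesis
      using height[OF True] by simp
  next
    case False
    then show ?thesis
      using total[of k] len sorted assms(2) by (simp add: distinct_card strict_sorted_iff)
  qed
  then have "\<forall>j<l2. r1 ! j < r2 ! j"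
    using columns_iff_counts[OF sorted disjoint] len assms(2) by simp
  then show "tab_of_path ?n p \<in> SYT l1 l2"
    unfolding T SYT_def using len sorted union by auto
  show "path_of (tab_of_path ?n p) = p"
    unfolding T by (rule path)
qed

abbreviation insert_word :: "nat list list \<Rightarrow> nat list \<Rightarrow> nat list list" where
  "insert_word P w \<equiv> foldl (\<lambda>P x. row_insert x P) P w"


definition two_rows :: "nat list \<Rightarrow> nat list \<Rightarrow> nat list list" where
  "two_rows r R = (if R = [] then [r] else [r, R])"

lemma row_insert_bump:
  assumes "\<forall>y\<in>set L. y < x" "H \<noteq> []" "\<forall>y\<in>set H. x < y"
  shows "row_insert x ((L @ H) # rs) = (L @ x # tl H) # row_insert (hd H) rs"
proof -
  obtain h H' where H: "H = h # H'" using assms(2) by (cases H) auto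
  have hx: "x < h" using assms(3) H by simp
  have nall: "\<not> (\<forall>y\<in>set (L @ H). y \<le> x)" using hx H by auto
  have tw: "takeWhile (\<lambda>y. y \<le> x) (L @ H) = L"
    using assms(1) hx H by (simp add: takeWhile_append2 less_imp_le)
  have dw: "dropWhile (\<lambda>y. y \<le> x) (L @ H) = H"
    using assms(1) hx H by (simp add: dropWhile_append2 less_imp_le)
  show ?thesis using nall tw dw by (simp only: row_insert.simps if_False) 
qed

lemma row_insert_single_row:
  assumes "\<forall>y\<in>set R. y < z"
  shows "row_insert z (if R = [] then [] else [R]) = [R @ [z]]"
  using assms by (cases "R = []") (auto simp: less_imp_le)

lemma row_insert_two_rows_bump:
  assumes "\<forall>y\<in>set L. y < x" "H \<noteq> []" "\<forall>y\<in>set H. x < y" "\<forall>y\<in>set R. y < hd H"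
  shows "row_insert x (two_rows (L @ H) R) = two_rows (L @ x # tl H) (R @ [hd H])"
proof -
  have "two_rows (L @ H) R = (L @ H) # (if R = [] then [] else [R])" unfolding two_rows_def by simp
  then show ?thesis using row_insert_bump[OF assms(1-3)] row_insert_single_row[OF assms(4)] unfolding two_rows_def by simp
qed

lemma row_insert_two_rows_append:
  assumes "\<forall>y\<in>set r. y \<le> x"
  shows "row_insert x (two_rows r R) = two_rows (r @ [x]) R"
  using assms unfolding two_rows_def by auto

lemma insert_word_bumps:
  assumes "sorted_wrt (<) bs" "\<forall>y\<in>set L. \<forall>b\<in>set bs. y < b" "\<forall>b\<in>set bs. \<forall>h\<in>set H. b < h"
    "length bs \<le> length H" "sorted_wrt (<) H" "\<forall>y\<in>set R. \<forall>h\<in>set H. y < h"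
  shows "insert_word (two_rows (L @ H) R) bs = two_rows (L @ bs @ drop (length bs) H) (R @ take (length bs) H)"
  using assms
proof (induction bs arbitrary: L H R)
  case Nil then show ?case by simp
next
  case (Cons b bs)
  obtain h H' where H: "H = h # H'" using Cons.prems(4) by (cases H) auto
  have step: "row_insert b (two_rows (L @ H) R) = two_rows (L @ b # H') (R @ [h])"
    using row_insert_two_rows_bump[of L b H R] Cons.prems H by auto
  have IH: "insert_word (two_rows ((L @ [b]) @ H') (R @ [h])) bs
      = two_rows ((L @ [b]) @ bs @ drop (length bs) H') ((R @ [h]) @ take (length bs) H')"
  proof (rule Cons.IH)
    show "sorted_wrt (<) bs" using Cons.prems(1) by simp
    show "\<forall>y\<in>set (L @ [b]). \<forall>c\<in>set bs. y < c" using Cons.prems(1,2) by auto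
    show "\<forall>c\<in>set bs. \<forall>h\<in>set H'. c < h" using Cons.prems(3) H by auto
    show "length bs \<le> length H'" using Cons.prems(4) H by simp
    show "sorted_wrt (<) H'" using Cons.prems(5) H by simp
    show "\<forall>y\<in>set (R @ [h]). \<forall>h\<in>set H'. y < h" using Cons.prems(5,6) H by auto
  qed
  show ?case using step IH H by simp
qed

lemma insert_word_sorted_row:
  assumes "sorted_wrt (<) (r @ A)"
  shows "insert_word [r] A = [r @ A]"
  using assms
proof (induction A arbitrary: r)
  case Nil then show ?case by simp
next
  case (Cons a A)
  have "\<forall>y\<in>set r. y \<le> a" using Cons.prems by (auto simp: sorted_wrt_append less_imp_le)
  then have "row_insert a [r] = [r @ [a]]" by simp
  moreover have "insert_word [r @ [a]] A = [(r @ [a]) @ A]" using Cons.IH Cons.prems by simp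
  ultimately show ?case by simp
qed

lemma insert_word_sorted:
  assumes "sorted_wrt (<) A" "A \<noteq> []"
  shows "insert_word [] A = [A]"
proof -
  obtain a A' where A: "A = a # A'" using assms(2) by (cases A) auto
  have "insert_word [] A = insert_word [[a]] A'" using A by simp
  also have "\<dots> = [[a] @ A']" by (rule insert_word_sorted_row) (use assms A in simp)
  finally show ?thesis using A by simp
qed

lemma insertion_tableau_sorted_append:
  assumes "sorted_wrt (<) A" "A \<noteq> []"
  shows "insertion_tableau (A @ B) = insert_word (two_rows A []) B"
  unfolding insertion_tableau_def using insert_word_sorted[OF assms] by (simp add: two_rows_def)

lemma insertion_tableau_DDU_word:
  assumes m1: "1 \<le> m"
  shows "insertion_tableau ([i + m + 1..<i + 2 * m + 1] @ [i..<i + m + 1])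
     = [[i..<i + m + 1], [i + m + 1..<i + 2 * m + 1]]"
proof -
  let ?H = "[i + m + 1..<i + 2 * m + 1]"
  have ne: "?H \<noteq> []" using m1 by simp
  have "insertion_tableau (?H @ [i..<i + m + 1]) = insert_word (two_rows ?H []) [i..<i + m + 1]"
    by (rule insertion_tableau_sorted_append[OF sorted_wrt_upt ne])
  also have "[i..<i + m + 1] = [i..<i + m] @ [i + m]" by simp
  also have "insert_word (two_rows ?H []) ([i..<i + m] @ [i + m])
      = row_insert (i + m) (insert_word (two_rows ([] @ ?H) []) [i..<i + m])" by simp
  also have "insert_word (two_rows ([] @ ?H) []) [i..<i + m]
      = two_rows ([] @ [i..<i + m] @ drop (length [i..<i + m]) ?H) ([] @ take (length [i..<i + m]) ?H)"
    by (rule insert_word_bumps) (auto simp del: upt_Suc)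
  also have "\<dots> = two_rows [i..<i + m] ?H" by simp
  also have "row_insert (i + m) (two_rows [i..<i + m] ?H) = two_rows ([i..<i + m] @ [i + m]) ?H"
    by (rule row_insert_two_rows_append) auto
  finally show ?thesis using ne unfolding two_rows_def by simp
qed

lemma insertion_tableau_UDU_word:
  assumes m1: "1 \<le> m"
  shows "insertion_tableau ((i # [i + m + 1..<i + 2 * m + 1]) @ [i + 1..<i + m + 1])
     = [[i..<i + m + 1], [i + m + 1..<i + 2 * m + 1]]"
proof -
  let ?H = "[i + m + 1..<i + 2 * m + 1]"
  have ne: "?H \<noteq> []" using m1 by simp
  have s: "sorted_wrt (<) (i # ?H)" by (simp del: upt_Suc)
  have E1: "insertion_tableau ((i # ?H) @ [i + 1..<i + m + 1]) = insert_word (two_rows ([i] @ ?H) []) [i + 1..<i + m + 1]"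
    using insertion_tableau_sorted_append[OF s] by simp
  have E2: "insert_word (two_rows ([i] @ ?H) []) [i + 1..<i + m + 1]
      = two_rows ([i] @ [i + 1..<i + m + 1] @ drop (length [i + 1..<i + m + 1]) ?H) ([] @ take (length [i + 1..<i + m + 1]) ?H)"
    by (rule insert_word_bumps) (auto simp del: upt_Suc)
  have "insertion_tableau ((i # ?H) @ [i + 1..<i + m + 1]) = two_rows (i # [i + 1..<i + m + 1]) ?H"
    using E1 E2 by (simp del: upt_Suc)
  moreover have "i # [i + 1..<i + m + 1] = [i..<i + m + 1]" by (simp add: upt_rec)
  ultimately show ?thesis using ne unfolding two_rows_def by simp
qed

declare upt_Suc[simp del]

definition bumping_inv :: "nat list \<Rightarrow> nat \<Rightarrow> nat list \<Rightarrow> nat list \<Rightarrow> bool" where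
  "bumping_inv A b r1 R \<longleftrightarrow> sorted_wrt (<) r1 \<and> (\<forall>x\<in>set R. \<forall>z\<in>set r1. b < z \<longrightarrow> x < z) \<and>
     (\<forall>z\<in>set r1. b < z \<longrightarrow> z \<in> set A) \<and> set R \<subseteq> set A \<and> (\<forall>z\<in>set r1. z \<in> set A \<or> z \<le> b)"

lemma bumping_inv_step:
  assumes I: "bumping_inv A b r1 R" and bx: "b < x" and xA: "x \<notin> set A"
  shows "\<exists>r1' R'. row_insert x (two_rows r1 R) = two_rows r1' R' \<and> bumping_inv A x r1' R' \<and> length r1 \<le> length r1' \<and> (\<exists>e. R' = R @ e)"
proof -
  have sr: "sorted_wrt (<) r1" and c2: "\<forall>y\<in>set R. \<forall>z\<in>set r1. b < z \<longrightarrow> y < z"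
    and c3: "\<forall>z\<in>set r1. b < z \<longrightarrow> z \<in> set A" and c4: "set R \<subseteq> set A"
    and c5: "\<forall>z\<in>set r1. z \<in> set A \<or> z \<le> b" using I unfolding bumping_inv_def by auto
  have xr: "x \<notin> set r1" using c5 xA bx by auto
  show ?thesis
  proof (cases "\<forall>y\<in>set r1. y \<le> x")
    case True
    have "row_insert x (two_rows r1 R) = two_rows (r1 @ [x]) R" by (rule row_insert_two_rows_append[OF True])
    moreover have "bumping_inv A x (r1 @ [x]) R"
    proof -
      have lt: "\<forall>y\<in>set r1. y < x" using True xr by (metis le_neq_implies_less)
      have "sorted_wrt (<) (r1 @ [x])" using sr lt by (simp add: sorted_wrt_append)
      then show ?thesis unfolding bumping_inv_def using c4 c5 lt bx by auto
    qed
    ultimately show ?thesis by fastforce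
  next
    case False
    define L where "L = takeWhile (\<lambda>y. y \<le> x) r1"
    define H where "H = dropWhile (\<lambda>y. y \<le> x) r1"
    have r1LH: "r1 = L @ H" unfolding L_def H_def by simp
    have Hne: "H \<noteq> []" unfolding H_def using False by (simp add: dropWhile_eq_Nil_conv)
    have hdH: "x < hd H" unfolding H_def using hd_dropWhile[of "\<lambda>y. y \<le> x" r1] Hne H_def by simp
    have sL: "sorted_wrt (<) L" and sH: "sorted_wrt (<) H" and LH: "\<forall>y\<in>set L. \<forall>z\<in>set H. y < z"
      using sr r1LH by (auto simp: sorted_wrt_append)
    obtain h H' where HH: "H = h # H'" using Hne by (cases H) auto
    have Hx: "\<forall>y\<in>set H. x < y" using hdH sH HH by auto
    have Lx: "\<forall>y\<in>set L. y < x"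
    proof
      fix y assume "y \<in> set L"
      then have "y \<le> x" "y \<in> set r1" unfolding L_def using set_takeWhileD by fastforce+
      then show "y < x" using xr by (metis le_neq_implies_less)
    qed
    have hr1: "h \<in> set r1" using r1LH HH by simp
    have Rh: "\<forall>y\<in>set R. y < hd H" using c2 hr1 hdH bx HH by auto
    have step: "row_insert x (two_rows (L @ H) R) = two_rows (L @ x # tl H) (R @ [hd H])"
      by (rule row_insert_two_rows_bump[OF Lx Hne Hx Rh])
    have "bumping_inv A x (L @ x # H') (R @ [h])" unfolding bumping_inv_def
    proof (intro conjI ballI impI)
      show "sorted_wrt (<) (L @ x # H')" using sL sH Lx Hx HH by (auto simp: sorted_wrt_append intro: less_trans)
    next
      fix y z assume y: "y \<in> set (R @ [h])" and z: "z \<in> set (L @ x # H')" and xz: "x < z"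
      then have zH': "z \<in> set H'" using Lx by auto
      then have zr: "z \<in> set r1" using r1LH HH by simp
      show "y < z"
      proof (cases "y \<in> set R")
        case True then show ?thesis using c2 zr xz bx by auto
      next
        case False then have "y = h" using y by simp
        then show ?thesis using sH HH zH' by simp
      qed
    next
      fix z assume z: "z \<in> set (L @ x # H')" and xz: "x < z"
      then have "z \<in> set H'" using Lx by auto
      then have "z \<in> set r1" using r1LH HH by simp
      then show "z \<in> set A" using c3 xz bx by auto
    next
      show "set (R @ [h]) \<subseteq> set A" using c4 c3 hr1 hdH bx HH by auto
    next
      fix z assume z: "z \<in> set (L @ x # H')"
      show "z \<in> set A \<or> z \<le> x"
      proof (cases "z = x")
        case False
        then have "z \<in> set r1" using z r1LH HH by auto
        then show ?thesis using c5 bx by auto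
      qed simp
    qed
    moreover have "length r1 \<le> length (L @ x # H')" using r1LH HH by simp
    ultimately show ?thesis using step r1LH HH by fastforce
  qed
qed

lemma bumping_inv_insert_word:
  assumes "bumping_inv A b r1 R" "sorted_wrt (<) bs" "\<forall>x\<in>set bs. b < x \<and> x \<notin> set A"
  shows "\<exists>r1' R'. insert_word (two_rows r1 R) bs = two_rows r1' R' \<and> length r1 \<le> length r1' \<and> set R' \<subseteq> set A \<and> (\<exists>e. R' = R @ e)"
  using assms
proof (induction bs arbitrary: b r1 R)
  case Nil
  have "set R \<subseteq> set A" using Nil.prems(1) unfolding bumping_inv_def by simp
  then show ?case by (intro exI[of _ r1] exI[of _ R]) auto
next
  case (Cons x bs)
  obtain r1' R' where s: "row_insert x (two_rows r1 R) = two_rows r1' R'" "bumping_inv A x r1' R'" "length r1 \<le> length r1'" "\<exists>e. R' = R @ e"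
    using bumping_inv_step[OF Cons.prems(1), of x] Cons.prems(3) by auto
  have "\<exists>r1'' R''. insert_word (two_rows r1' R') bs = two_rows r1'' R'' \<and> length r1' \<le> length r1'' \<and> set R'' \<subseteq> set A \<and> (\<exists>e. R'' = R' @ e)"
    by (rule Cons.IH[OF s(2)]) (use Cons.prems(2,3) in auto)
  then show ?case using s by fastforce
qed

lemma two_rows_eq_pair: "two_rows r R = [X, Y] \<Longrightarrow> r = X \<and> R = Y"
  unfolding two_rows_def by (auto split: if_splits)

lemma insert_word_bumped_from_first_row:
  assumes sA: "sorted_wrt (<) A" and "A \<noteq> []" and sB: "sorted_wrt (<) B"
    and new: "\<forall>x\<in>set B. 0 < x \<and> x \<notin> set A"
    and rows: "insert_word (two_rows A []) B = [r, R]"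
  shows "length A \<le> length r" and "set R \<subseteq> set A"
proof -
  have "bumping_inv A 0 A []"
    unfolding bumping_inv_def using sA by auto
  then obtain r' R' where "insert_word (two_rows A []) B = two_rows r' R'"
    "length A \<le> length r'" "set R' \<subseteq> set A"
    using bumping_inv_insert_word[OF _ sB new] by blast
  with rows two_rows_eq_pair[of r' R'] show "length A \<le> length r" "set R \<subseteq> set A"
    by auto
qed

lemma insert_word_first_bump:
  assumes sA: "sorted_wrt (<) A" and "A \<noteq> []" and sB: "sorted_wrt (<) (b # B)"
    and below: "\<forall>y\<in>set A. b < y" and new: "\<forall>x\<in>set B. x \<notin> set A"
    and rows: "insert_word (two_rows A []) (b # B) = [r, R]"
  shows "hd R = hd A"
proof -
  obtain h A' where A: "A = h # A'"
    using \<open>A \<noteq> []\<close> by (cases A) auto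
  have "row_insert b (two_rows ([] @ A) []) = two_rows ([] @ b # A') ([] @ [h])"
    using row_insert_two_rows_bump[of "[]" b A "[]"] below A by auto
  moreover have "bumping_inv A b (b # A') [h]"
    unfolding bumping_inv_def using sA A below by auto
  ultimately obtain r' R' where w: "insert_word (two_rows A []) (b # B) = two_rows r' R'"
    and e: "\<exists>e. R' = [h] @ e"
    using bumping_inv_insert_word[of A b "b # A'" "[h]" B] sB new by auto
  have "R' = R"
    using w rows two_rows_eq_pair[of r' R' r R] by simp
  with e A show ?thesis
    by auto
qed

lemma insertion_tableau_two_rows_cases:
  assumes sA: "sorted_wrt (<) A" and sB: "sorted_wrt (<) B" and disj: "set A \<inter> set B = {}"
    and un: "set A \<union> set B = {i..i + 2 * m}" and "1 \<le> m" "1 \<le> i"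
    and tableau: "insertion_tableau (A @ B) = [[i..<i + m + 1], [i + m + 1..<i + 2 * m + 1]]"
  shows "set A = insert i {i + m + 1..i + 2 * m} \<or> set A = {i + m + 1..i + 2 * m}"
proof -
  have "A \<noteq> []"
  proof
    assume "A = []"
    moreover have "B \<noteq> []"
      using un calculation by auto
    ultimately have "insertion_tableau (A @ B) = [B]"
      using insert_word_sorted[OF sB] unfolding insertion_tableau_def by simp
    then show False
      using tableau by simp
  qed
  then have rows: "insert_word (two_rows A []) B = [[i..<i + m + 1], [i + m + 1..<i + 2 * m + 1]]"
    using insertion_tableau_sorted_append[OF sA] tableau by simp
  have "\<forall>x\<in>set B. 0 < x \<and> x \<notin> set A"
    using un disj \<open>1 \<le> i\<close> by auto
  note bumped = insert_word_bumped_from_first_row[OF sA \<open>A \<noteq> []\<close> sB this rows]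
  have upper: "{i + m + 1..i + 2 * m} \<subseteq> set A"
    using bumped(2) by auto
  show ?thesis
  proof (cases "i \<in> set A")
    case True
    then have "insert i {i + m + 1..i + 2 * m} \<subseteq> set A"
      using upper by simp
    moreover have "card (set A) \<le> card (insert i {i + m + 1..i + 2 * m})"
      using bumped(1) sA \<open>1 \<le> m\<close> by (simp add: distinct_card strict_sorted_iff)
    ultimately show ?thesis
      using card_seteq by blast
  next
    case False
    then have "i \<in> set B"
      using un by auto
    then obtain b B' where B: "B = b # B'"
      by (cases B) auto
    have "b = i"
    proof (rule ccontr)
      assume "b \<noteq> i"
      then have "b < i"
        using \<open>i \<in> set B\<close> sB B by auto
      moreover have "i \<le> b"
        using un B by auto
      ultimately show False
        by simp
    qed
    have "\<forall>y\<in>set A. i < y"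
    proof
      fix y assume "y \<in> set A"
      then have "i \<le> y" "y \<noteq> i"
        using un False by auto
      then show "i < y"
        by simp
    qed
    then have "hd [i + m + 1..<i + 2 * m + 1] = hd A"
      using insert_word_first_bump[OF sA \<open>A \<noteq> []\<close>, of i B' "[i..<i + m + 1]"] B \<open>b = i\<close> sB disj rows
      by auto
    then have "hd A = i + m + 1"
      using upt_conv_Cons[of "i + m + 1" "i + 2 * m + 1"] \<open>1 \<le> m\<close> by simp
    then have "set A \<subseteq> {i + m + 1..i + 2 * m}"
      using un sA \<open>A \<noteq> []\<close> \<open>1 \<le> m\<close> by (cases A) (auto simp: less_imp_le)
    then show ?thesis
      using upper by auto
  qed
qed

lemma filter_window_rows:
  assumes T: "(r1, r2) \<in> SYT l1 l2" and "1 \<le> i" "i + 2 * m \<le> l1 + l2"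
  shows "filter (\<lambda>x. i \<le> x \<and> x \<le> i + 2 * m) r2 = filter (\<lambda>x. path_of (r1, r2) x = 1) [i..<i + 2 * m + 1]"
    and "filter (\<lambda>x. i \<le> x \<and> x \<le> i + 2 * m) r1 = filter (\<lambda>x. path_of (r1, r2) x = -1) [i..<i + 2 * m + 1]"
  using path_of_SYT[OF T] SYT_rows(3,4)[OF T] assms(2,3)
  by (auto intro!: strict_sorted_unique sorted_wrt_filter)

lemma filter_window_UDU:
  assumes "UDU_factor p i m"
  shows "filter (\<lambda>x. p x = 1) [i..<i + 2 * m + 1] = i # [i + m + 1..<i + 2 * m + 1]"
    and "filter (\<lambda>x. p x = -1) [i..<i + 2 * m + 1] = [i + 1..<i + m + 1]"
proof -
  have split: "[i..<i + 2 * m + 1] = i # [i + 1..<i + m + 1] @ [i + m + 1..<i + 2 * m + 1]"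
    using upt_add_eq_append[of "i + 1" "i + m + 1" m] upt_conv_Cons[of i "i + 2 * m + 1"]
    by (simp add: mult_2 add.assoc)
  show "filter (\<lambda>x. p x = 1) [i..<i + 2 * m + 1] = i # [i + m + 1..<i + 2 * m + 1]"
    "filter (\<lambda>x. p x = -1) [i..<i + 2 * m + 1] = [i + 1..<i + m + 1]"
    using assms unfolding split UDU_factor_def by (auto simp: filter_empty_conv filter_id_conv)
qed

lemma filter_window_DDU:
  assumes "DDU_factor p i m"
  shows "filter (\<lambda>x. p x = 1) [i..<i + 2 * m + 1] = [i + m + 1..<i + 2 * m + 1]"
    and "filter (\<lambda>x. p x = -1) [i..<i + 2 * m + 1] = [i..<i + m + 1]"
proof -
  have split: "[i..<i + 2 * m + 1] = [i..<i + m + 1] @ [i + m + 1..<i + 2 * m + 1]"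
    using upt_add_eq_append[of i "i + m + 1" m] by (simp add: mult_2 add.assoc)
  show "filter (\<lambda>x. p x = 1) [i..<i + 2 * m + 1] = [i + m + 1..<i + 2 * m + 1]"
    "filter (\<lambda>x. p x = -1) [i..<i + 2 * m + 1] = [i..<i + m + 1]"
    using assms unfolding split DDU_factor_def by (auto simp: filter_empty_conv filter_id_conv)
qed

lemma factor_of_up_steps:
  assumes step: "\<And>x. p x = 1 \<or> p x = -1"
    and up_steps: "set (filter (\<lambda>x. p x = 1) [i..<i + 2 * m + 1]) = insert i {i + m + 1..i + 2 * m} \<or>
      set (filter (\<lambda>x. p x = 1) [i..<i + 2 * m + 1]) = {i + m + 1..i + 2 * m}"
  shows "UDU_factor p i m \<or> DDU_factor p i m"
proof -
  have in_A: "x \<in> set (filter (\<lambda>x. p x = 1) [i..<i + 2 * m + 1]) \<longleftrightarrow> p x = 1"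
    if "i \<le> x" "x \<le> i + 2 * m" for x
    using that by simp
  from up_steps show ?thesis
  proof (elim disjE)
    assume A: "set (filter (\<lambda>x. p x = 1) [i..<i + 2 * m + 1]) = insert i {i + m + 1..i + 2 * m}"
    have "UDU_factor p i m"
      unfolding UDU_factor_def
    proof (intro conjI allI impI)
      show "p i = 1"
        using in_A[of i, unfolded A] by simp
    next
      fix k assume "i < k \<and> k \<le> i + m"
      then show "p k = -1"
        using in_A[of k, unfolded A] step[of k] by auto
    next
      fix k assume "i + m < k \<and> k \<le> i + 2 * m"
      then show "p k = 1"
        using in_A[of k, unfolded A] by auto
    qed
    then show ?thesis ..
  next
    assume A: "set (filter (\<lambda>x. p x = 1) [i..<i + 2 * m + 1]) = {i + m + 1..i + 2 * m}"
    have "DDU_factor p i m"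
      unfolding DDU_factor_def
    proof (intro conjI allI impI)
      fix k assume "i \<le> k \<and> k \<le> i + m"
      then show "p k = -1"
        using in_A[of k, unfolded A] step[of k] by auto
    next
      fix k assume "i + m < k \<and> k \<le> i + 2 * m"
      then show "p k = 1"
        using in_A[of k, unfolded A] by auto
    qed
    then show ?thesis ..
  qed
qed

lemma dyck_interval_iff_factor:
  assumes T: "(r1, r2) \<in> SYT l1 l2" and "1 \<le> i" "1 \<le> m" "i + 2 * m \<le> l1 + l2"
  shows "dyck_interval (l1 + l2) (row_word (r1, r2)) i m \<longleftrightarrow>
    UDU_factor (path_of (r1, r2)) i m \<or> DDU_factor (path_of (r1, r2)) i m"
proof -
  let ?p = "path_of (r1, r2)" and ?W = "[i..<i + 2 * m + 1]"
  let ?A = "filter (\<lambda>x. ?p x = 1) ?W" and ?B = "filter (\<lambda>x. ?p x = -1) ?W"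
  have "filter (\<lambda>x. i \<le> x \<and> x \<le> i + 2 * m) (row_word (r1, r2)) = ?A @ ?B"
    unfolding row_word_def using filter_window_rows[OF T assms(2,4)] by simp
  then have dyck: "dyck_interval (l1 + l2) (row_word (r1, r2)) i m \<longleftrightarrow>
      insertion_tableau (?A @ ?B) = [[i..<i + m + 1], [i + m + 1..<i + 2 * m + 1]]"
    unfolding dyck_interval_def using assms(2-4) by simp
  have step: "?p x = 1 \<or> ?p x = -1" for x
    unfolding path_of_def by simp
  show ?thesis
  proof
    assume "dyck_interval (l1 + l2) (row_word (r1, r2)) i m"
    then have tableau: "insertion_tableau (?A @ ?B) = [[i..<i + m + 1], [i + m + 1..<i + 2 * m + 1]]"
      using dyck by simp
    have "set ?A \<inter> set ?B = {}" "set ?A \<union> set ?B = {i..i + 2 * m}"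
      using step by auto
    then have "set ?A = insert i {i + m + 1..i + 2 * m} \<or> set ?A = {i + m + 1..i + 2 * m}"
      by (rule insertion_tableau_two_rows_cases[OF sorted_filter_upt sorted_filter_upt _ _ assms(3,2) tableau])
    then show "UDU_factor ?p i m \<or> DDU_factor ?p i m"
      by (rule factor_of_up_steps[OF step])
  next
    assume "UDU_factor ?p i m \<or> DDU_factor ?p i m"
    then show "dyck_interval (l1 + l2) (row_word (r1, r2)) i m"
    proof
      assume "UDU_factor ?p i m"
      show ?thesis
        unfolding dyck filter_window_UDU[OF \<open>UDU_factor ?p i m\<close>]
        by (rule insertion_tableau_UDU_word[OF assms(3)])
    next
      assume "DDU_factor ?p i m"
      show ?thesis
        unfolding dyck filter_window_DDU[OF \<open>DDU_factor ?p i m\<close>]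
        by (rule insertion_tableau_DDU_word[OF assms(3)])
    qed
  qed
qed

lemma unbr_skip:
  "\<forall>x\<in>set xs. x \<noteq> i \<and> x \<noteq> Suc i \<Longrightarrow> unbr i k c (xs @ ys) = unbr i (k + length xs) c ys"
  by (induction xs arbitrary: k) auto

lemma unbr_open: "unbr i k c (replicate m (Suc i) @ ys) = unbr i (k + m) (c + m) ys"
  by (induction m arbitrary: k c) auto

lemma unbr_close: "m \<le> c \<Longrightarrow> unbr i k c (replicate m i @ ys) = unbr i (k + m) (c - m) ys"
  by (induction m arbitrary: k c) (auto simp: Suc_diff_Suc)

lemma unbr_UDU_word:
  assumes "\<forall>x\<in>set xs \<union> set ys \<union> set zs. x \<noteq> i \<and> x \<noteq> Suc i"
  shows "unbr i 0 0 (xs @ i # replicate m (Suc i) @ ys @ replicate m i @ zs) = [length xs]"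
  using assms unbr_skip[of xs i 0 0] unbr_skip[of ys i] unbr_skip[of zs i _ _ "[]"]
  by (simp add: unbr_open unbr_close)

lemma unbr_DDU_word:
  assumes "\<forall>x\<in>set xs \<union> set ys \<union> set zs. x \<noteq> i \<and> x \<noteq> Suc i"
  shows "unbr i 0 0 (xs @ replicate m (Suc i) @ ys @ replicate m i @ i # zs)
    = [length xs + m + length ys + m]"
  using assms unbr_skip[of xs i 0 0] unbr_skip[of ys i] unbr_skip[of zs i _ _ "[]"]
  by (simp add: unbr_open unbr_close)

lemma f_op_unique_unbracketed: "unbr i 0 0 w = [k] \<Longrightarrow> f_op i w = Some (w[k := Suc i])"
  unfolding f_op_def by simp

lemma map_update_distinct:
  assumes "distinct w" "k < length w"
  shows "(map f w)[k := c] = map (f(w ! k := c)) w"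
  using assms by (auto intro!: nth_equalityI simp: nth_list_update nth_eq_iff_index_eq)

lemma sorted_split:
  fixes r :: "nat list"
  assumes "sorted_wrt (<) r"
  shows "r = filter (\<lambda>x. x < a) r @ filter (\<lambda>x. \<not> x < a) r"
  using assms
proof (induction r)
  case (Cons x r)
  show ?case
  proof (cases "x < a")
    case False
    then have "filter (\<lambda>x. x < a) r = []" "filter (\<lambda>x. \<not> x < a) r = r"
      using Cons.prems by (auto simp: filter_empty_conv filter_id_conv)
    then show ?thesis
      using False by simp
  qed (use Cons in simp)
qed simp

lemma sorted_split3:
  fixes r :: "nat list"
  assumes s: "sorted_wrt (<) r" and "a \<le> b"
  shows "r = filter (\<lambda>x. x < a) r @ filter (\<lambda>x. a \<le> x \<and> x \<le> b) r @ filter (\<lambda>x. b < x) r"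
proof -
  have "filter (\<lambda>x. \<not> x < a) r = filter (\<lambda>x. x < Suc b) (filter (\<lambda>x. \<not> x < a) r)
      @ filter (\<lambda>x. \<not> x < Suc b) (filter (\<lambda>x. \<not> x < a) r)"
    by (rule sorted_split[OF sorted_wrt_filter[OF s]])
  moreover have "filter (\<lambda>x. x < Suc b) (filter (\<lambda>x. \<not> x < a) r) = filter (\<lambda>x. a \<le> x \<and> x \<le> b) r"
    "filter (\<lambda>x. \<not> x < Suc b) (filter (\<lambda>x. \<not> x < a) r) = filter (\<lambda>x. b < x) r"
    unfolding filter_filter using assms(2) by (auto intro: filter_cong)
  ultimately show ?thesis
    using sorted_split[OF s, of a] by metis
qed

lemma SYT_rows_split_window:
  assumes T: "(r1, r2) \<in> SYT l1 l2" and "1 \<le> i" "i + 2 * m \<le> l1 + l2"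
  shows "r2 = filter (\<lambda>x. x < i) r2 @ filter (\<lambda>x. path_of (r1, r2) x = 1) [i..<i + 2 * m + 1]
      @ filter (\<lambda>x. i + 2 * m < x) r2"
    and "r1 = filter (\<lambda>x. x < i) r1 @ filter (\<lambda>x. path_of (r1, r2) x = -1) [i..<i + 2 * m + 1]
      @ filter (\<lambda>x. i + 2 * m < x) r1"
  using sorted_split3[OF SYT_rows(4)[OF T], of i "i + 2 * m"]
    sorted_split3[OF SYT_rows(3)[OF T], of i "i + 2 * m"] filter_window_rows[OF assms]
  by simp_all

lemma map_relabel_outside:
  "\<forall>x\<in>set xs. x < i \<or> i + 2 * m < x \<Longrightarrow> map (relabel i m) xs = xs"
  unfolding relabel_def by (induction xs) auto

lemma map_eq_replicate: "\<forall>x\<in>set xs. f x = c \<Longrightarrow> map f xs = replicate (length xs) c"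
  by (induction xs) auto

lemma map_relabel_runs:
  shows "map (relabel i m) [i..<i + m + 1] = replicate (Suc m) i"
    and "map (relabel i m) [i + 1..<i + m + 1] = replicate m i"
    and "map (relabel i m) [i + m + 1..<i + 2 * m + 1] = replicate m (Suc i)"
  by (subst map_eq_replicate; auto simp: relabel_def)+

lemma f_op_UDU:
  assumes T: "(r1, r2) \<in> SYT l1 l2" and "1 \<le> i" "1 \<le> m" "i + 2 * m \<le> l1 + l2"
    and factor: "UDU_factor (path_of (r1, r2)) i m"
  shows "f_op i (map (relabel i m) (row_word (r1, r2)))
    = Some (map ((relabel i m)(i := Suc i)) (row_word (r1, r2)))"
proof -
  define A2 A3 B2 B3 where "A2 = filter (\<lambda>x. x < i) r2" and "A3 = filter (\<lambda>x. i + 2 * m < x) r2"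
    and "B2 = filter (\<lambda>x. x < i) r1" and "B3 = filter (\<lambda>x. i + 2 * m < x) r1"
  have rows: "r2 = A2 @ (i # [i + m + 1..<i + 2 * m + 1]) @ A3" "r1 = B2 @ [i + 1..<i + m + 1] @ B3"
    using SYT_rows_split_window[OF T assms(2,4)] filter_window_UDU[OF factor]
    unfolding A2_def A3_def B2_def B3_def by simp_all
  have outside: "\<forall>x\<in>set A2 \<union> set (A3 @ B2) \<union> set B3. x < i \<or> i + 2 * m < x"
    unfolding A2_def A3_def B2_def B3_def by auto
  then have "map (relabel i m) (row_word (r1, r2)) =
      A2 @ i # replicate m (Suc i) @ (A3 @ B2) @ replicate m i @ B3"
    unfolding row_word_def rows
    using map_relabel_runs[simplified] by (simp add: map_relabel_outside relabel_def)
  moreover have "\<forall>x\<in>set A2 \<union> set (A3 @ B2) \<union> set B3. x \<noteq> i \<and> x \<noteq> Suc i"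
    using outside assms(3) by fastforce
  ultimately have "unbr i 0 0 (map (relabel i m) (row_word (r1, r2))) = [length A2]"
    using unbr_UDU_word by presburger
  moreover have "row_word (r1, r2) ! length A2 = i" "length A2 < length (row_word (r1, r2))"
    unfolding row_word_def rows by (simp_all add: nth_append)
  moreover have "distinct (row_word (r1, r2))"
    using SYT_rows[OF T] unfolding row_word_def by (auto simp: strict_sorted_iff)
  ultimately show ?thesis
    using f_op_unique_unbracketed map_update_distinct by metis
qed

lemma f_op_DDU:
  assumes T: "(r1, r2) \<in> SYT l1 l2" and "1 \<le> i" "1 \<le> m" "i + 2 * m \<le> l1 + l2"
    and factor: "DDU_factor (path_of (r1, r2)) i m"
  shows "f_op i (map (relabel i m) (row_word (r1, r2)))
    = Some (map ((relabel i m)(i + m := Suc i)) (row_word (r1, r2)))"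
proof -
  define A2 A3 B2 B3 where "A2 = filter (\<lambda>x. x < i) r2" and "A3 = filter (\<lambda>x. i + 2 * m < x) r2"
    and "B2 = filter (\<lambda>x. x < i) r1" and "B3 = filter (\<lambda>x. i + 2 * m < x) r1"
  let ?k = "length A2 + m + length (A3 @ B2) + m"
  have rows: "r2 = A2 @ [i + m + 1..<i + 2 * m + 1] @ A3" "r1 = B2 @ [i..<i + m + 1] @ B3"
    using SYT_rows_split_window[OF T assms(2,4)] filter_window_DDU[OF factor]
    unfolding A2_def A3_def B2_def B3_def by simp_all
  have outside: "\<forall>x\<in>set A2 \<union> set (A3 @ B2) \<union> set B3. x < i \<or> i + 2 * m < x"
    unfolding A2_def A3_def B2_def B3_def by auto
  then have "map (relabel i m) (row_word (r1, r2)) =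
      A2 @ replicate m (Suc i) @ (A3 @ B2) @ replicate m i @ i # B3"
    unfolding row_word_def rows
    using map_relabel_runs[simplified] by (simp add: map_relabel_outside replicate_app_Cons_same)
  moreover have "\<forall>x\<in>set A2 \<union> set (A3 @ B2) \<union> set B3. x \<noteq> i \<and> x \<noteq> Suc i"
    using outside assms(3) by fastforce
  ultimately have "unbr i 0 0 (map (relabel i m) (row_word (r1, r2))) = [?k]"
    using unbr_DDU_word by presburger
  moreover have "row_word (r1, r2) ! ?k = i + m" "?k < length (row_word (r1, r2))"
    unfolding row_word_def rows by (simp_all add: nth_append)
  moreover have "distinct (row_word (r1, r2))"
    using SYT_rows[OF T] unfolding row_word_def by (auto simp: strict_sorted_iff)
  ultimately show ?thesis
    using f_op_unique_unbracketed map_update_distinct by metis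
qed

lemma perm_nth_eq_card_less:
  assumes d: "distinct u" and s: "set u = {1..length u}" and k: "k < length u"
  shows "u ! k = card {l. l < length u \<and> u ! l < u ! k} + 1"
proof -
  have "{l. l < length u \<and> u ! l < u ! k} = {l. l < length u \<and> u ! l \<in> {1..<u ! k}}"
  proof -
    have "\<And>l. l < length u \<Longrightarrow> 1 \<le> u ! l" using s by (metis atLeastAtMost_iff nth_mem)
    then show ?thesis by auto
  qed
  moreover have "card {l. l < length u \<and> u ! l \<in> {1..<u ! k}} = card {1..<u ! k}"
  proof -
    have inj: "inj_on (nth u) {l. l < length u \<and> u ! l \<in> {1..<u ! k}}"
      using d by (auto simp: inj_on_def distinct_conv_nth)
    have img: "nth u ` {l. l < length u \<and> u ! l \<in> {1..<u ! k}} = {1..<u ! k}"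
    proof
      show "nth u ` {l. l < length u \<and> u ! l \<in> {1..<u ! k}} \<subseteq> {1..<u ! k}" by auto
      show "{1..<u ! k} \<subseteq> nth u ` {l. l < length u \<and> u ! l \<in> {1..<u ! k}}"
      proof
        fix x assume x: "x \<in> {1..<u ! k}"
        have "u ! k \<le> length u" using s k by (metis atLeastAtMost_iff nth_mem)
        then have "x \<in> set u" using s x by auto
        then obtain l where "l < length u" "u ! l = x" by (auto simp: in_set_conv_nth)
        then show "x \<in> nth u ` {l. l < length u \<and> u ! l \<in> {1..<u ! k}}" using x by auto
      qed
    qed
    show ?thesis using card_image[OF inj] img by simp
  qed
  moreover have "1 \<le> u ! k" using s k by (metis atLeastAtMost_iff nth_mem)
  ultimately show ?thesis by simp
qed

lemma std_eq_if_same_order: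
  assumes d: "distinct u" and s: "set u = {1..length u}" and len: "length u = length v"
    and ord: "\<And>k l. k < length v \<Longrightarrow> l < length v \<Longrightarrow> (u ! l < u ! k \<longleftrightarrow> (v ! l < v ! k \<or> (v ! l = v ! k \<and> l < k)))"
  shows "std v = u"
proof (rule nth_equalityI)
  show "length (std v) = length u" unfolding std_def using len by simp
  fix k assume "k < length (std v)"
  then have k: "k < length v" unfolding std_def by simp
  have "std v ! k = card {l. l < length v \<and> v ! l < v ! k} + card {l. l < k \<and> v ! l = v ! k} + 1"
    unfolding std_def using k by simp
  also have "card {l. l < length v \<and> v ! l < v ! k} + card {l. l < k \<and> v ! l = v ! k}
      = card {l. l < length v \<and> (v ! l < v ! k \<or> (v ! l = v ! k \<and> l < k))}"
  proof -
    have "{l. l < length v \<and> (v ! l < v ! k \<or> (v ! l = v ! k \<and> l < k))}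
        = {l. l < length v \<and> v ! l < v ! k} \<union> {l. l < k \<and> v ! l = v ! k}" using k by auto
    moreover have "{l. l < length v \<and> v ! l < v ! k} \<inter> {l. l < k \<and> v ! l = v ! k} = {}" by auto
    ultimately show ?thesis by (simp add: card_Un_disjoint)
  qed
  also have "{l. l < length v \<and> (v ! l < v ! k \<or> (v ! l = v ! k \<and> l < k))} = {l. l < length u \<and> u ! l < u ! k}"
    using ord[OF k] len by auto
  also have "card \<dots> + 1 = u ! k" using perm_nth_eq_card_less[OF d s] k len by simp
  finally show "std v ! k = u ! k" .
qed

lemma std_map_mono:
  assumes "distinct u" and "set u = {1..length u}" and "mono f"
    and ties: "\<And>l k. l < k \<Longrightarrow> k < length u \<Longrightarrow> f (u ! l) = f (u ! k) \<Longrightarrow> u ! l < u ! k"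
  shows "std (map f u) = u"
proof (rule std_eq_if_same_order[OF assms(1,2)])
  fix k l assume "k < length (map f u)" "l < length (map f u)"
  then have kl: "k < length u" "l < length u"
    by simp_all
  have "u ! l \<noteq> u ! k" if "l \<noteq> k"
    using assms(1) kl that by (simp add: nth_eq_iff_index_eq)
  moreover have "f (u ! l) < f (u ! k) \<Longrightarrow> u ! l < u ! k"
    using monoD[OF assms(3), of "u ! k" "u ! l"] by (meson not_le)
  moreover have "f (u ! l) \<le> f (u ! k)" if "u ! l < u ! k"
    using monoD[OF assms(3)] that by simp
  ultimately show "u ! l < u ! k \<longleftrightarrow> map f u ! l < map f u ! k \<or> (map f u ! l = map f u ! k \<and> l < k)"
    using ties[of l k] ties[of k l] kl by (cases "l < k"; cases "k < l") (auto simp: order.order_iff_strict)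
qed simp

lemma std_map_row_word:
  assumes T: "(r1, r2) \<in> SYT l1 l2" and "mono f"
    and ties: "\<And>x y. x \<in> set r2 \<Longrightarrow> y \<in> set r1 \<Longrightarrow> f x = f y \<Longrightarrow> x < y"
  shows "std (map f (row_word (r1, r2))) = row_word (r1, r2)"
proof (rule std_map_mono[OF _ _ assms(2)])
  note rows = SYT_rows[OF T]
  have "length (row_word (r1, r2)) = l1 + l2" "set (row_word (r1, r2)) = {1..l1 + l2}"
    using rows(1,2,5) unfolding row_word_def by auto
  then show "set (row_word (r1, r2)) = {1..length (row_word (r1, r2))}"
    by simp
  show "distinct (row_word (r1, r2))"
    using rows(3,4,7) unfolding row_word_def by (auto simp: strict_sorted_iff)
  fix l k assume lk: "l < k" "k < length (row_word (r1, r2))"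
    and tie: "f (row_word (r1, r2) ! l) = f (row_word (r1, r2) ! k)"
  show "row_word (r1, r2) ! l < row_word (r1, r2) ! k"
  proof (cases "k < length r2")
    case True
    then show ?thesis
      using lk rows(4) unfolding row_word_def by (simp add: nth_append sorted_wrt_nth_less)
  next
    case False
    show ?thesis
    proof (cases "l < length r2")
      case True
      then show ?thesis
        using False lk tie ties[of "r2 ! l" "r1 ! (k - length r2)"] unfolding row_word_def
        by (simp add: nth_append)
    next
      case False
      then show ?thesis
        using \<open>\<not> k < length r2\<close> lk rows(3) unfolding row_word_def
        by (simp add: nth_append sorted_wrt_nth_less)
    qed
  qed
qed

definition shift_cycle :: "nat \<Rightarrow> nat \<Rightarrow> nat \<Rightarrow> nat" where
  "shift_cycle a b x = (if x = a then b else if a < x \<and> x \<le> b then x - 1 else x)"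

lemma shift_cycle_bij:
  assumes "1 \<le> a" "a \<le> b" "b \<le> n"
  shows "bij_betw (shift_cycle a b) {1..n} {1..n}"
  by (rule bij_betw_byWitness[where f' = "\<lambda>y. if y = b then a else if a \<le> y \<and> y < b then y + 1 else y"])
    (use assms in \<open>auto simp: shift_cycle_def\<close>)

lemma shift_cycle_strict_mono_on:
  assumes "a \<le> b" and "a \<in> S \<Longrightarrow> \<forall>x\<in>S. \<not> (a < x \<and> x \<le> b)"
  shows "strict_mono_on S (shift_cycle a b)"
  using assms unfolding strict_mono_on_def shift_cycle_def by (auto simp: not_le) (meson not_le)

lemma tab_of_path_map_rows:
  assumes T: "(r1, r2) \<in> SYT l1 l2" and g: "bij_betw g {1..l1 + l2} {1..l1 + l2}"
    and mono: "strict_mono_on (set r1) g" "strict_mono_on (set r2) g"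
    and q: "\<forall>x\<in>{1..l1 + l2}. q (g x) = path_of (r1, r2) x"
  shows "tab_of_path (l1 + l2) q = (map g r1, map g r2)"
proof -
  let ?n = "l1 + l2"
  have image: "g ` {x \<in> {1..?n}. path_of (r1, r2) x = c} = {y \<in> {1..?n}. q y = c}" for c
  proof -
    have "g ` {x \<in> {1..?n}. path_of (r1, r2) x = c} = {y \<in> g ` {1..?n}. q y = c}"
      using q by force
    then show ?thesis
      using bij_betw_imp_surj_on[OF g] by simp
  qed
  have rows: "set r1 = {x \<in> {1..?n}. path_of (r1, r2) x = -1}" "set r2 = {x \<in> {1..?n}. path_of (r1, r2) x = 1}"
    using path_of_SYT[OF T] by auto
  have sorted: "sorted_wrt (<) (map g r1)" "sorted_wrt (<) (map g r2)"
    using SYT_rows(3,4)[OF T] mono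
    by (auto intro!: sorted_wrt_map_mono simp: strict_mono_on_def)
  have "filter (\<lambda>k. q k = -1) [1..<?n + 1] = map g r1" "filter (\<lambda>k. q k = 1) [1..<?n + 1] = map g r2"
    using image[of "-1"] image[of 1] rows sorted sorted_filter_upt
    by (auto intro!: strict_sorted_unique simp only: set_filter_upt set_map) auto
  then show ?thesis
    unfolding tab_of_path_def by simp
qed

lemma of_word_std_shift_cycle:
  assumes T: "(r1, r2) \<in> SYT l1 l2" and "l2 \<le> l1"
    and bq: "ballot_path (l1 + l2) (int l2 - int l1) q"
    and "1 \<le> a" "a \<le> b" "b \<le> l1 + l2"
    and run: "\<forall>x. a < x \<and> x \<le> b \<longrightarrow> path_of (r1, r2) x \<noteq> path_of (r1, r2) a"
    and shifted: "\<forall>x\<in>{1..l1 + l2}. q (shift_cycle a b x) = path_of (r1, r2) x"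
    and "mono f" and ties: "\<And>x y. q x = 1 \<Longrightarrow> q y = -1 \<Longrightarrow> f x = f y \<Longrightarrow> x < y"
  shows "of_word l2 (std (map (f \<circ> shift_cycle a b) (row_word (r1, r2)))) = tab_of_path (l1 + l2) q"
proof -
  let ?g = "shift_cycle a b"
  have "strict_mono_on (set r) ?g" if "r = r1 \<or> r = r2" for r
  proof (rule shift_cycle_strict_mono_on[OF \<open>a \<le> b\<close>])
    assume "a \<in> set r"
    then show "\<forall>x\<in>set r. \<not> (a < x \<and> x \<le> b)"
      using run path_of_SYT[OF T] that by auto
  qed
  then have tab: "tab_of_path (l1 + l2) q = (map ?g r1, map ?g r2)"
    using tab_of_path_map_rows[OF T shift_cycle_bij _ _ shifted] assms(4-6) by blast
  then have T': "(map ?g r1, map ?g r2) \<in> SYT l1 l2" and path': "path_of (map ?g r1, map ?g r2) = q"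
    using ballot_path_SYT[OF bq \<open>l2 \<le> l1\<close>] by simp_all
  have "std (map f (row_word (map ?g r1, map ?g r2))) = row_word (map ?g r1, map ?g r2)"
    using path_of_SYT[OF T'] ties unfolding path' by (intro std_map_row_word[OF T' \<open>mono f\<close>]) auto
  moreover have "length (map ?g r2) = l2"
    using SYT_rows(2)[OF T] by simp
  ultimately show ?thesis
    unfolding tab by (simp add: row_word_def of_word_def)
qed

definition collapse :: "nat \<Rightarrow> nat \<Rightarrow> nat \<Rightarrow> nat" where
  "collapse i m x =
     (if i \<le> x \<and> x < i + m then i else if i + m \<le> x \<and> x \<le> i + 2 * m then Suc i else x)"

lemma mono_collapse: "mono (collapse i m)"
  by (auto simp: mono_def collapse_def)

lemma collapse_eq_cases:
  assumes "collapse i m x = collapse i m y" and "x \<noteq> y" and "1 \<le> m"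
  shows "(i \<le> x \<and> x < i + m \<and> i \<le> y \<and> y < i + m) \<or>
    (i + m \<le> x \<and> x \<le> i + 2 * m \<and> i + m \<le> y \<and> y \<le> i + 2 * m)"
  using assms unfolding collapse_def by (auto split: if_splits)

text \<open>The letter changed by f_i is, after relabelling, the image of the shifted entry; reading
  the result through the collapse of the two new blocks gives back the relabelled word.\<close>
lemma relabel_update_UDU: "1 \<le> m \<Longrightarrow> (relabel i m)(i := Suc i) = collapse i m \<circ> shift_cycle i (i + m)"
  by (auto simp: fun_eq_iff relabel_def collapse_def shift_cycle_def)

lemma relabel_update_DDU:
  "1 \<le> m \<Longrightarrow> (relabel i m)(i + m := Suc i) = collapse i m \<circ> shift_cycle (i + m) (i + 2 * m)"
  by (auto simp: fun_eq_iff relabel_def collapse_def shift_cycle_def)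

lemma std_after_UDU_move:
  assumes T: "(r1, r2) \<in> SYT l1 l2" and "l2 \<le> l1"
    and mv: "UDU_move (l1 + l2) i m (path_of (r1, r2)) q"
  shows "of_word l2 (std (map ((relabel i m)(i := Suc i)) (row_word (r1, r2)))) = tab_of_path (l1 + l2) q"
proof -
  interpret UDU_move "l1 + l2" i m "path_of (r1, r2)" q
    by (rule mv)
  have p: "path_of (r1, r2) i = 1" "\<forall>k. i < k \<and> k \<le> i + m \<longrightarrow> path_of (r1, r2) k = -1"
    "\<forall>k. i + m < k \<and> k \<le> i + 2 * m \<longrightarrow> path_of (r1, r2) k = 1"
    using factor unfolding UDU_factor_def by auto
  show ?thesis
    unfolding relabel_update_UDU[OF m_pos]
  proof (rule of_word_std_shift_cycle[OF T \<open>l2 \<le> l1\<close>])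
    show "ballot_path (l1 + l2) (int l2 - int l1) q"
      using ballot_path_q SYT_ballot_path(1)[OF T \<open>l2 \<le> l1\<close>] by blast
    show "\<forall>x\<in>{1..l1 + l2}. q (shift_cycle i (i + m) x) = path_of (r1, r2) x"
    proof
      fix x
      consider "x = i" | "i < x" "x \<le> i + m" | "\<not> (i \<le> x \<and> x \<le> i + m)"
        by linarith
      then show "q (shift_cycle i (i + m) x) = path_of (r1, r2) x"
      proof cases
        case 2
        then consider "x - 1 = i" | "i < x - 1" "x - 1 < i + m"
          by arith
        then show ?thesis
          using 2 p(2)[rule_format, of x] p(2)[rule_format, of "x - 1"] m_pos
          unfolding move shift_cycle_def by cases auto
      qed (use p m_pos in \<open>auto simp: move shift_cycle_def\<close>)
    qed
    fix x y assume xy: "q x = 1" "q y = -1" "collapse i m x = collapse i m y"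
    then have "x \<noteq> y"
      by auto
    with collapse_eq_cases[OF xy(3) _ m_pos] show "x < y"
      using q_blocks[of x] q_blocks[of y] xy by force
  qed (use p i_pos window_le mono_collapse in auto)
qed

lemma std_after_DDU_move:
  assumes T: "(r1, r2) \<in> SYT l1 l2" and "l2 \<le> l1"
    and mv: "DDU_move (l1 + l2) i m (path_of (r1, r2)) q"
  shows "of_word l2 (std (map ((relabel i m)(i + m := Suc i)) (row_word (r1, r2))))
    = tab_of_path (l1 + l2) q"
proof -
  interpret DDU_move "l1 + l2" i m "path_of (r1, r2)" q
    by (rule mv)
  have p: "\<forall>k. i \<le> k \<and> k \<le> i + m \<longrightarrow> path_of (r1, r2) k = -1"
    "\<forall>k. i + m < k \<and> k \<le> i + 2 * m \<longrightarrow> path_of (r1, r2) k = 1"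
    using factor unfolding DDU_factor_def by auto
  show ?thesis
    unfolding relabel_update_DDU[OF m_pos]
  proof (rule of_word_std_shift_cycle[OF T \<open>l2 \<le> l1\<close>])
    show "ballot_path (l1 + l2) (int l2 - int l1) q"
      using ballot_path_iff SYT_ballot_path(1)[OF T \<open>l2 \<le> l1\<close>] by blast
    show "\<forall>x\<in>{1..l1 + l2}. q (shift_cycle (i + m) (i + 2 * m) x) = path_of (r1, r2) x"
    proof
      fix x
      consider "x = i + m" | "i + m < x" "x \<le> i + 2 * m" | "\<not> (i + m \<le> x \<and> x \<le> i + 2 * m)"
        by linarith
      then show "q (shift_cycle (i + m) (i + 2 * m) x) = path_of (r1, r2) x"
      proof cases
        case 2
        then consider "x - 1 = i + m" | "i + m < x - 1" "x - 1 < i + 2 * m"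
          by arith
        then show ?thesis
          using 2 p(2)[rule_format, of x] p(2)[rule_format, of "x - 1"] m_pos
          unfolding move shift_cycle_def by cases auto
      qed (use p m_pos in \<open>auto simp: move shift_cycle_def\<close>)
    qed
    fix x y assume xy: "q x = 1" "q y = -1" "collapse i m x = collapse i m y"
    then have "x \<noteq> y"
      by auto
    with collapse_eq_cases[OF xy(3) _ m_pos] show "x < y"
      using q_blocks(1)[of x] q_blocks(2)[of y] xy by (cases "y = i + 2 * m") force+
  qed (use p i_pos window_le mono_collapse in auto)
qed

lemma path_move_CS_step:
  assumes T: "(r1, r2) \<in> SYT l1 l2" and "l2 \<le> l1"
    and mv: "UDU_move (l1 + l2) i m (path_of (r1, r2)) q \<or> DDU_move (l1 + l2) i m (path_of (r1, r2)) q"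
  shows "dyck_interval (l1 + l2) (row_word (r1, r2)) i m \<and>
    (\<exists>w'. f_op i (map (relabel i m) (row_word (r1, r2))) = Some w' \<and>
      of_word l2 (std w') = tab_of_path (l1 + l2) q)"
  using mv
proof
  assume mv: "UDU_move (l1 + l2) i m (path_of (r1, r2)) q"
  then interpret UDU_move "l1 + l2" i m "path_of (r1, r2)" q .
  show ?thesis
    using dyck_interval_iff_factor[OF T i_pos m_pos window_le] factor
      f_op_UDU[OF T i_pos m_pos window_le factor] std_after_UDU_move[OF T \<open>l2 \<le> l1\<close> mv] by auto
next
  assume mv: "DDU_move (l1 + l2) i m (path_of (r1, r2)) q"
  then interpret DDU_move "l1 + l2" i m "path_of (r1, r2)" q .
  show ?thesis
    using dyck_interval_iff_factor[OF T i_pos m_pos window_le] factor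
      f_op_DDU[OF T i_pos m_pos window_le factor] std_after_DDU_move[OF T \<open>l2 \<le> l1\<close> mv] by auto
qed

lemma CS_edge_imp_path_move:
  assumes "l2 \<le> l1" and "CS_edge l1 l2 T T'"
  shows "path_move (l1 + l2) (path_of T) (path_of T')"
proof -
  obtain r1 r2 i m w' where T: "T = (r1, r2)" "(r1, r2) \<in> SYT l1 l2"
    and dyck: "dyck_interval (l1 + l2) (row_word (r1, r2)) i m"
    and f: "f_op i (map (relabel i m) (row_word (r1, r2))) = Some w'" and T': "T' = of_word l2 (std w')"
    using assms(2) unfolding CS_edge_def by (cases T) auto
  let ?p = "path_of (r1, r2)"
  have window: "window (l1 + l2) i m"
    using dyck unfolding dyck_interval_def window_def by auto
  then have "UDU_factor ?p i m \<or> DDU_factor ?p i m"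
    using dyck_interval_iff_factor[OF T(2)] dyck unfolding window_def by blast
  then obtain q where mv: "UDU_move (l1 + l2) i m ?p q \<or> DDU_move (l1 + l2) i m ?p q"
    using window unfolding UDU_move_def UDU_move_axioms_def DDU_move_def DDU_move_axioms_def by blast
  then have "path_move (l1 + l2) ?p q"
    unfolding path_move_def by blast
  moreover have "T' = tab_of_path (l1 + l2) q"
    using path_move_CS_step[OF T(2) assms(1) mv] f T' by auto
  moreover have "ballot_path (l1 + l2) (int l2 - int l1) q"
    using path_move_ballot_path calculation(1) SYT_ballot_path(1)[OF T(2) assms(1)] by blast
  ultimately show ?thesis
    using ballot_path_SYT(2)[OF _ assms(1)] T(1) by simp
qed

lemma path_move_imp_CS_edge:
  assumes "l2 \<le> l1" and bp: "ballot_path (l1 + l2) (int l2 - int l1) p" and "path_move (l1 + l2) p q"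
  shows "CS_edge l1 l2 (tab_of_path (l1 + l2) p) (tab_of_path (l1 + l2) q)"
proof -
  obtain r1 r2 where T: "tab_of_path (l1 + l2) p = (r1, r2)"
    by (cases "tab_of_path (l1 + l2) p")
  then have SYT: "(r1, r2) \<in> SYT l1 l2" and p: "path_of (r1, r2) = p"
    using ballot_path_SYT[OF bp assms(1)] by auto
  obtain i m where "UDU_move (l1 + l2) i m (path_of (r1, r2)) q \<or> DDU_move (l1 + l2) i m (path_of (r1, r2)) q"
    using assms(3) unfolding path_move_def p by blast
  then obtain w' where "dyck_interval (l1 + l2) (row_word (r1, r2)) i m"
    "f_op i (map (relabel i m) (row_word (r1, r2))) = Some w'"
    "tab_of_path (l1 + l2) q = of_word l2 (std w')"
    using path_move_CS_step[OF SYT assms(1)] by metis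
  moreover have "tab_of_path (l1 + l2) q \<in> SYT l1 l2"
    using ballot_path_SYT(1)[OF path_move_ballot_path[OF assms(3) bp] assms(1)] .
  ultimately show ?thesis
    unfolding CS_edge_def T using SYT by blast
qed

lemma rtranclp_CS_edge_imp_path_move:
  assumes "l2 \<le> l1" and "(CS_edge l1 l2)\<^sup>*\<^sup>* T T'"
  shows "(path_move (l1 + l2))\<^sup>*\<^sup>* (path_of T) (path_of T')"
  using assms(2)
  by (induction rule: rtranclp_induct)
    (auto intro: rtranclp.rtrancl_into_rtrancl CS_edge_imp_path_move[OF assms(1)])

lemma rtranclp_path_move_imp_CS_edge:
  assumes "l2 \<le> l1" and "ballot_path (l1 + l2) (int l2 - int l1) p"
    and "(path_move (l1 + l2))\<^sup>*\<^sup>* p q"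
  shows "(CS_edge l1 l2)\<^sup>*\<^sup>* (tab_of_path (l1 + l2) p) (tab_of_path (l1 + l2) q)"
  using assms(3)
proof (induction rule: rtranclp_induct)
  case (step q r)
  then show ?case
    using path_move_imp_CS_edge[OF assms(1) rtranclp_path_move_ballot_path[OF step.hyps(1) assms(2)]]
    by (meson rtranclp.rtrancl_into_rtrancl)
qed simp

lemma runs_concat: "concat (runs P xs) = xs"
  by (induction xs) (auto split: list.splits)

lemma runs_nonempty: "r \<in> set (runs P xs) \<Longrightarrow> r \<noteq> []"
  by (induction xs arbitrary: r) (auto split: list.splits if_splits)

lemma runs_parity:
  "xs \<noteq> [] \<Longrightarrow> k < length (runs P xs) \<Longrightarrow> y \<in> set (runs P xs ! k) \<Longrightarrow> (P y \<longleftrightarrow> (P (hd xs) \<longleftrightarrow> even k))"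
proof (induction xs arbitrary: k y)
  case Nil then show ?case by simp
next
  case (Cons x xs)
  show ?case
  proof (cases "runs P xs")
    case Nil
    then have "runs P (x # xs) = [[x]]" by simp
    then show ?thesis using Cons.prems by auto
  next
    case (Cons r rs)
    have rne: "r \<noteq> []" using runs_nonempty[of r P xs] Cons by simp
    have xsne: "xs \<noteq> []" using runs_concat[of P xs] Cons rne by auto
    have hdr: "hd r = hd xs" using runs_concat[of P xs] Cons rne by (cases r) auto
    note IH = "Cons.IH"[OF xsne]
    show ?thesis
    proof (cases "P (hd r) = P x")
      case True
      then have R: "runs P (x # xs) = (x # r) # rs" using Cons rne by simp
      show ?thesis
      proof (cases k)
        case 0
        then have "y = x \<or> y \<in> set r" using Cons.prems R by auto
        then show ?thesis
        proof
          assume "y \<in> set r"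
          then have "P y \<longleftrightarrow> (P (hd xs) \<longleftrightarrow> even (0::nat))" using IH[of 0 y] Cons by simp
          then show ?thesis using 0 True hdr by simp
        qed (use 0 in simp)
      next
        case (Suc k')
        then have "y \<in> set (runs P xs ! k)" "k < length (runs P xs)" using Cons.prems R Cons by auto
        then show ?thesis using IH[of k y] True hdr by simp
      qed
    next
      case False
      then have R: "runs P (x # xs) = [x] # r # rs" using Cons rne by auto
      show ?thesis
      proof (cases k)
        case 0 then show ?thesis using Cons.prems R by simp
      next
        case (Suc k')
        then have "y \<in> set (runs P xs ! k')" "k' < length (runs P xs)" using Cons.prems R Cons by auto
        then have "P y \<longleftrightarrow> (P (hd xs) \<longleftrightarrow> even k')" using IH by blast
        then show ?thesis using Suc False hdr by auto
      qed
    qed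
  qed
qed

lemma runs_decode:
  fixes xs :: "'a list"
  assumes ne: "xs \<noteq> []" and x: "x \<in> set xs" and post: "\<forall>s\<in>set post. s = []"
  shows "P x \<longleftrightarrow> (\<exists>k<length (map set ((if P (hd (hd (runs P xs))) then [] else [[]]) @ runs P xs @ post)).
      even k \<and> x \<in> map set ((if P (hd (hd (runs P xs))) then [] else [[]]) @ runs P xs @ post) ! k)"
    (is "_ \<longleftrightarrow> (\<exists>k<length ?L. even k \<and> x \<in> ?L ! k)")
proof -
  let ?R = "runs P xs"
  let ?pre = "(if P (hd (hd ?R)) then [] else [[]]) :: 'a list list"
  have Rne: "?R \<noteq> []" using runs_concat[of P xs] ne by auto
  have hd1: "hd (hd ?R) = hd xs"
  proof -
    obtain r rs where "?R = r # rs" using Rne by (cases ?R) auto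
    moreover have "r \<noteq> []" using runs_nonempty[of r P xs] calculation by simp
    ultimately show ?thesis using runs_concat[of P xs] by (cases r) auto
  qed
  have idx: "?L ! (j + length ?pre) = set (?R ! j)" if "j < length ?R" for j
    using that by (simp add: nth_append)
  have par: "P y \<longleftrightarrow> even (j + length ?pre)" if "j < length ?R" "y \<in> set (?R ! j)" for j y
    using runs_parity[OF ne that] hd1 by auto
  show ?thesis
  proof
    assume Px: "P x"
    obtain j where j: "j < length ?R" "x \<in> set (?R ! j)"
      using x runs_concat[of P xs] by (metis in_set_conv_nth set_concat UN_iff)
    have "even (j + length ?pre)" using par[OF j] Px by simp
    moreover have "j + length ?pre < length ?L" using j by simp
    ultimately show "\<exists>k<length ?L. even k \<and> x \<in> ?L ! k" using idx[OF j(1)] j(2) by metis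
  next
    assume "\<exists>k<length ?L. even k \<and> x \<in> ?L ! k"
    then obtain k where k: "k < length ?L" "even k" "x \<in> ?L ! k" by blast
    have L: "?L = map set ?pre @ map set ?R @ map set post" by simp
    show "P x"
    proof (cases "k < length ?pre")
      case True
      then have "?L ! k = {}" by (auto simp: nth_append split: if_splits)
      then show ?thesis using k by simp
    next
      case False
      show ?thesis
      proof (cases "k < length ?pre + length ?R")
        case True
        define j where "j = k - length ?pre"
        have j: "j < length ?R" "k = j + length ?pre" using True False unfolding j_def by auto
        then have "x \<in> set (?R ! j)" using idx k by simp
        then show ?thesis using par[OF j(1)] j k by simp
      next
        case F2: False
        define pre where "pre = ?pre"
        define R where "R = ?R"
        have L2: "?L = (map set pre @ map set R) @ map set post" unfolding pre_def R_def by simp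
        have k2: "length pre + length R \<le> k" using F2 unfolding pre_def R_def by simp
        have nl: "\<not> k < length (map set pre @ map set R)" using k2 by simp
        have kl: "k < length pre + length R + length post" using k(1) unfolding pre_def R_def by simp
        have e1: "?L ! k = map set post ! (k - length (map set pre @ map set R))"
          unfolding L2 by (simp only: nth_append nl if_False)
        have e2: "map set post ! (k - length (map set pre @ map set R)) = set (post ! (k - length pre - length R))"
          using kl k2 by simp
        have e: "?L ! k = set (post ! (k - length pre - length R))" using e1 e2 by simp
        have "post ! (k - length pre - length R) \<in> set post" using kl k2 by simp
        then have "post ! (k - length pre - length R) = []" using post by blast
        then show ?thesis using k(3) e by simp
      qed
    qed
  qed
qed

lemma eastern_exposed_iff_even_block:
  assumes "1 \<le> x" "x \<le> n"
  shows "eastern_exposed n p x \<longleftrightarrow> (\<exists>k<length (rcomp n p). even k \<and> x \<in> rcomp n p ! k)"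
proof -
  have ne: "[1..<n + 1] \<noteq> []" and x: "x \<in> set [1..<n + 1]"
    using assms by auto
  have "runs (eastern_exposed n p) [1..<n + 1] \<noteq> []"
    using runs_concat[of _ "[1..<n + 1]"] ne by (metis concat.simps(1))
  moreover have "\<forall>s\<in>set (if P then [] else [[]]). s = []" for P :: bool
    by auto
  ultimately show ?thesis
    unfolding rcomp_def Let_def using runs_decode[OF ne x] by simp
qed

lemma rcomp_eq_iff:
  assumes "1 \<le> n"
  shows "rcomp n p = rcomp n q \<longleftrightarrow> eastern_exposed n p = eastern_exposed n q"
proof
  assume same: "rcomp n p = rcomp n q"
  show "eastern_exposed n p = eastern_exposed n q"
  proof
    fix x
    show "eastern_exposed n p x = eastern_exposed n q x"
    proof (cases "1 \<le> x \<and> x \<le> n")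
      case True
      then show ?thesis
        using eastern_exposed_iff_even_block[of x n] same by simp
    next
      case False
      then show ?thesis
        unfolding eastern_exposed_def by blast
    qed
  qed
qed (simp add: rcomp_def)

theorem corollary6p6:
  fixes l1 l2 :: nat and T T' :: tab
  assumes "1 \<le> l2" and "l2 \<le> l1"
    and "T \<in> SYT l1 l2" and "T' \<in> SYT l1 l2"
  shows "same_scc l1 l2 T T' \<longleftrightarrow>
         rcomp (l1 + l2) (path_of T) = rcomp (l1 + l2) (path_of T')"
proof -
  let ?n = "l1 + l2" and ?h = "int l2 - int l1"
  have ballot: "ballot_path ?n ?h (path_of T)" "ballot_path ?n ?h (path_of T')"
    and tab: "tab_of_path ?n (path_of T) = T" "tab_of_path ?n (path_of T') = T'"
    using SYT_ballot_path assms(2-4) by blast+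
  have reach: "(CS_edge l1 l2)\<^sup>*\<^sup>* S S' \<longleftrightarrow> (path_move ?n)\<^sup>*\<^sup>* (path_of S) (path_of S')"
    if "S = T \<and> S' = T' \<or> S = T' \<and> S' = T" for S S'
  proof
    show "(path_move ?n)\<^sup>*\<^sup>* (path_of S) (path_of S') \<Longrightarrow> (CS_edge l1 l2)\<^sup>*\<^sup>* S S'"
      using rtranclp_path_move_imp_CS_edge[OF assms(2), of "path_of S" "path_of S'"] ballot tab that
      by auto
  qed (rule rtranclp_CS_edge_imp_path_move[OF assms(2)])
  have "same_scc l1 l2 T T' \<longleftrightarrow>
      (path_move ?n)\<^sup>*\<^sup>* (path_of T) (path_of T') \<and> (path_move ?n)\<^sup>*\<^sup>* (path_of T') (path_of T)"
    unfolding same_scc_def using reach by blast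
  also have "\<dots> \<longleftrightarrow> eastern_exposed ?n (path_of T) = eastern_exposed ?n (path_of T')"
    using path_move_cycle_eastern_exposed path_move_connected[OF ballot(1,2)]
      path_move_connected[OF ballot(2,1)] by metis
  also have "\<dots> \<longleftrightarrow> rcomp ?n (path_of T) = rcomp ?n (path_of T')"
    using rcomp_eq_iff assms(1) by simp
  finally show ?thesis .
qed

end
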